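(* Let $R$ be a von Neumann regular semiartinian ring with primitive factors artinian, with socle sequence $(S_\alpha\mid\alpha\le\sigma+1)$ and dimension sequence $\{(\lambda_\alpha,\{(n_{\alpha\beta},K_{\alpha\beta})\mid\beta<\lambda_\alpha\})\mid\alpha\le\sigma\}$. Then for each $\alpha\le\sigma$ the following are equivalent: (i) $R/S_\alpha$ is commutative; (ii) for each $\beta<\lambda_\alpha$, $K_{\alpha\beta}$ is commutative and $n_{\alpha\beta}=1$; (iii) for each $\beta<\lambda_\alpha$, $K_{\alpha\beta}$ is commutative, and $R/S_\alpha$ is isomorphic to a subring $\bar R_\alpha$ of the ring direct product $\prod_{\beta<\lambda_\alpha}K_{\alpha\beta}$ such that $\mathrm{Soc}(\bar R_\alpha)=\bigoplus_{\beta<\lambda_\alpha}K_{\alpha\beta}$.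
   Context: Socle sequence of $R$: $S_0=0$, $S_{\alpha+1}/S_\alpha=\mathrm{Soc}(R/S_\alpha)$, unions at limit ordinals; $R$ semiartinian means $S_{\sigma+1}=R$ for some $\sigma$ (Loewy length $\sigma+1$). $R$ has primitive factors artinian if $R/P$ is artinian for every primitive ideal $P$. For such $R$ (regular, semiartinian, primitive factors artinian) it is known that for each $\alpha\le\sigma$ the layer $L_\alpha=S_{\alpha+1}/S_\alpha$ is isomorphic, as a ring without unit, to $\bigoplus_{\beta<\lambda_\alpha}M_{n_{\alpha\beta}}(K_{\alpha\beta})$, where $\lambda_\alpha>0$ is the number of homogeneous components of $L_\alpha$ (infinite for $\alpha<\sigma$, finite for $\alpha=\sigma$), each $n_{\alpha\beta}$ is a positive integer, and each $K_{\alpha\beta}$ is a skew-field; the summand $M_{n_{\alpha\beta}}(K_{\alpha\beta})$ corresponds to the $\beta$-th homogeneous component $H_{\alpha\beta}\cong P_{\alpha\beta}^{n_{\alpha\beta}}$ of $L_\alpha$ with $P_{\alpha\beta}$ a simple projective $R/S_\alpha$-module and $K_{\alpha\beta}\cong\mathrm{End}(P_{\alpha\beta})$. The family $\{(\lambda_\alpha,\{(n_{\alpha\beta},K_{\alpha\beta})\mid\beta<\lambda_\alpha\})\mid\alpha\le\sigma\}$ is the dimension sequence of $R$. *)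

theory Defs
  imports "HOL-Algebra.Algebra"
begin

definition right_ideal :: "('a, 'b) ring_scheme \<Rightarrow> 'a set \<Rightarrow> bool" where
  "right_ideal R J \<longleftrightarrow> additive_subgroup J R \<and>
     (\<forall>x\<in>J. \<forall>r\<in>carrier R. x \<otimes>\<^bsub>R\<^esub> r \<in> J)"

text \<open>M/I is a simple right R-module (I a right ideal strictly contained in the right
  ideal M, nothing in between).  Simple submodules of (R/I)_R are exactly such M/I.\<close>
definition minimal_over :: "('a, 'b) ring_scheme \<Rightarrow> 'a set \<Rightarrow> 'a set \<Rightarrow> bool" where
  "minimal_over R I M \<longleftrightarrow> right_ideal R I \<and> right_ideal R M \<and> I \<subset> M \<and>
     (\<forall>J. right_ideal R J \<and> I \<subseteq> J \<and> J \<subseteq> M \<longrightarrow> J = I \<or> J = M)"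

definition minimal_right_ideal :: "('a, 'b) ring_scheme \<Rightarrow> 'a set \<Rightarrow> bool" where
  "minimal_right_ideal R M \<longleftrightarrow> minimal_over R {\<zero>\<^bsub>R\<^esub>} M"

definition rsoc :: "('a, 'b) ring_scheme \<Rightarrow> 'a set" where
  "rsoc R = \<Inter>{J. right_ideal R J \<and> (\<forall>M. minimal_right_ideal R M \<longrightarrow> M \<subseteq> J)}"

text \<open>Preimage in R of Soc(R/I), where R/I is regarded as a right R-module
  (its submodules are the right ideals of R containing I).\<close>
definition soc_succ :: "('a, 'b) ring_scheme \<Rightarrow> 'a set \<Rightarrow> 'a set" where
  "soc_succ R I = \<Inter>{J. right_ideal R J \<and> I \<subseteq> J \<and>
       (\<forall>M. minimal_over R I M \<longrightarrow> M \<subseteq> J)}"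

text \<open>The terms S_alpha of the socle sequence: S_0 = 0, S_(alpha+1) = preimage of
  Soc(R/S_alpha), unions at limits.\<close>
inductive socle_term :: "('a, 'b) ring_scheme \<Rightarrow> 'a set \<Rightarrow> bool" for R where
  zero: "socle_term R {\<zero>\<^bsub>R\<^esub>}"
| succ: "socle_term R I \<Longrightarrow> socle_term R (soc_succ R I)"
| union: "C \<noteq> {} \<Longrightarrow> (\<forall>I\<in>C. socle_term R I) \<Longrightarrow> socle_term R (\<Union>C)"

definition semiartinian :: "('a, 'b) ring_scheme \<Rightarrow> bool" where
  "semiartinian R \<longleftrightarrow> socle_term R (carrier R)"

definition von_neumann_regular :: "('a, 'b) ring_scheme \<Rightarrow> bool" where
  "von_neumann_regular R \<longleftrightarrow>
     (\<forall>a\<in>carrier R. \<exists>x\<in>carrier R. a \<otimes>\<^bsub>R\<^esub> x \<otimes>\<^bsub>R\<^esub> a = a)"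

text \<open>Primitive ideal: annihilator of a simple right R-module; every simple right module is
  isomorphic to a simple subquotient M/I of R_R.\<close>
definition primitive_ideal :: "('a, 'b) ring_scheme \<Rightarrow> 'a set \<Rightarrow> bool" where
  "primitive_ideal R P \<longleftrightarrow> (\<exists>I M. minimal_over R I M \<and>
      P = {r\<in>carrier R. \<forall>x\<in>M. x \<otimes>\<^bsub>R\<^esub> r \<in> I})"

text \<open>R/P is (right) artinian: DCC on right ideals of R/P, i.e. on right ideals of R
  containing P.\<close>
definition artinian_factor :: "('a, 'b) ring_scheme \<Rightarrow> 'a set \<Rightarrow> bool" where
  "artinian_factor R P \<longleftrightarrow> \<not> (\<exists>f :: nat \<Rightarrow> 'a set.
      \<forall>n. right_ideal R (f n) \<and> P \<subseteq> f n \<and> f (Suc n) \<subset> f n)"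

definition primitive_factors_artinian :: "('a, 'b) ring_scheme \<Rightarrow> bool" where
  "primitive_factors_artinian R \<longleftrightarrow>
     (\<forall>P. primitive_ideal R P \<longrightarrow> artinian_factor R P)"

text \<open>An R-linear map J/I \<rightarrow> J'/I' is represented by an (arbitrary) lift f : J \<rightarrow> J'.\<close>
definition mod_hom :: "('a, 'b) ring_scheme \<Rightarrow> 'a set \<Rightarrow> 'a set \<Rightarrow> 'a set \<Rightarrow> 'a set
    \<Rightarrow> ('a \<Rightarrow> 'a) \<Rightarrow> bool" where
  "mod_hom R I J I' J' f \<longleftrightarrow> (\<forall>x\<in>J. f x \<in> J') \<and> (\<forall>x\<in>I. f x \<in> I') \<and>
     (\<forall>x\<in>J. \<forall>y\<in>J. f (x \<oplus>\<^bsub>R\<^esub> y) \<ominus>\<^bsub>R\<^esub> (f x \<oplus>\<^bsub>R\<^esub> f y) \<in> I') \<and>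
     (\<forall>x\<in>J. \<forall>r\<in>carrier R. f (x \<otimes>\<^bsub>R\<^esub> r) \<ominus>\<^bsub>R\<^esub> (f x \<otimes>\<^bsub>R\<^esub> r) \<in> I')"

definition mod_iso :: "('a, 'b) ring_scheme \<Rightarrow> 'a set \<Rightarrow> 'a set \<Rightarrow> 'a set \<Rightarrow> 'a set \<Rightarrow> bool" where
  "mod_iso R I J I' J' \<longleftrightarrow> (\<exists>f g. mod_hom R I J I' J' f \<and> mod_hom R I' J' I J g \<and>
     (\<forall>x\<in>J. g (f x) \<ominus>\<^bsub>R\<^esub> x \<in> I) \<and> (\<forall>y\<in>J'. f (g y) \<ominus>\<^bsub>R\<^esub> y \<in> I'))"

text \<open>Homogeneous component of Soc(R/I) determined by the simple module M/I
  (given by its preimage in R).\<close>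
definition hom_comp :: "('a, 'b) ring_scheme \<Rightarrow> 'a set \<Rightarrow> 'a set \<Rightarrow> 'a set" where
  "hom_comp R I M = \<Inter>{J. right_ideal R J \<and> I \<subseteq> J \<and>
       (\<forall>M'. minimal_over R I M' \<and> mod_iso R I M I M' \<longrightarrow> M' \<subseteq> J)}"

text \<open>The set of homogeneous components of Soc(R/I); it indexes beta < lambda_alpha.\<close>
definition hom_comps :: "('a, 'b) ring_scheme \<Rightarrow> 'a set \<Rightarrow> 'a set set" where
  "hom_comps R I = {hom_comp R I M | M. minimal_over R I M}"

definition comp_simple :: "('a, 'b) ring_scheme \<Rightarrow> 'a set \<Rightarrow> 'a set \<Rightarrow> 'a set" where
  "comp_simple R I H = (SOME M. minimal_over R I M \<and> M \<subseteq> H)"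

text \<open>Endomorphism ring of the module M/I; elements are the induced maps on cosets.\<close>
definition qcarrier :: "('a, 'b) ring_scheme \<Rightarrow> 'a set \<Rightarrow> 'a set \<Rightarrow> 'a set set" where
  "qcarrier R I M = {I +>\<^bsub>R\<^esub> x | x. x \<in> M}"

definition End_ring :: "('a, 'b) ring_scheme \<Rightarrow> 'a set \<Rightarrow> 'a set \<Rightarrow> ('a set \<Rightarrow> 'a set) ring" where
  "End_ring R I M =
    \<lparr> carrier = {\<phi>. \<phi> \<in> extensional (qcarrier R I M) \<and>
                  (\<exists>f. mod_hom R I M I M f \<and> (\<forall>x\<in>M. \<phi> (I +>\<^bsub>R\<^esub> x) = I +>\<^bsub>R\<^esub> f x))},
      monoid.mult = (\<lambda>\<phi> \<psi>. (\<lambda>c\<in>qcarrier R I M. \<phi> (\<psi> c))),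
      one = (\<lambda>c\<in>qcarrier R I M. c),
      ring.zero = (\<lambda>c\<in>qcarrier R I M. I),
      ring.add = (\<lambda>\<phi> \<psi>. (\<lambda>c\<in>qcarrier R I M. \<phi> c <+>\<^bsub>R\<^esub> \<psi> c)) \<rparr>"

definition comp_field :: "('a, 'b) ring_scheme \<Rightarrow> 'a set \<Rightarrow> 'a set \<Rightarrow> ('a set \<Rightarrow> 'a set) ring" where
  "comp_field R I H = End_ring R I (comp_simple R I H)"

text \<open>n_(alpha beta): the length of H/I, i.e. the least number of simple submodules of
  R/I whose sum is H/I (H/I \<cong> P^n).\<close>
definition comp_mult :: "('a, 'b) ring_scheme \<Rightarrow> 'a set \<Rightarrow> 'a set \<Rightarrow> nat" where
  "comp_mult R I H = (LEAST n. \<exists>Ms. length Ms = n \<and> (\<forall>M\<in>set Ms. minimal_over R I M) \<and>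
      H = foldr (\<lambda>M A. M <+>\<^bsub>R\<^esub> A) Ms I)"

definition commutative_ring :: "('c, 'd) ring_scheme \<Rightarrow> bool" where
  "commutative_ring S \<longleftrightarrow>
     (\<forall>x\<in>carrier S. \<forall>y\<in>carrier S. x \<otimes>\<^bsub>S\<^esub> y = y \<otimes>\<^bsub>S\<^esub> x)"

definition prod_ring :: "'i set \<Rightarrow> ('i \<Rightarrow> ('c, 'd) ring_scheme) \<Rightarrow> ('i \<Rightarrow> 'c) ring" where
  "prod_ring B K =
    \<lparr> carrier = (\<Pi>\<^sub>E b\<in>B. carrier (K b)),
      monoid.mult = (\<lambda>f g. (\<lambda>b\<in>B. f b \<otimes>\<^bsub>K b\<^esub> g b)),
      one = (\<lambda>b\<in>B. \<one>\<^bsub>K b\<^esub>),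
      ring.zero = (\<lambda>b\<in>B. \<zero>\<^bsub>K b\<^esub>),
      ring.add = (\<lambda>f g. (\<lambda>b\<in>B. f b \<oplus>\<^bsub>K b\<^esub> g b)) \<rparr>"

definition dsum_carrier :: "'i set \<Rightarrow> ('i \<Rightarrow> ('c, 'd) ring_scheme) \<Rightarrow> ('i \<Rightarrow> 'c) set" where
  "dsum_carrier B K = {f \<in> carrier (prod_ring B K). finite {b\<in>B. f b \<noteq> \<zero>\<^bsub>K b\<^esub>}}"

end

theory Submission
  imports Defs
begin

text \<open>
  Write \<open>I = S\<^sub>\<alpha>\<close> and call \<open>M\<close> \<^emph>\<open>simple over\<close> \<open>I\<close> when \<open>M/I\<close> is a simple submodule of \<open>(R/I)\<^sub>R\<close>.
  Since \<open>R\<close> is semiartinian, \<open>Soc(R/I)\<close> is essential in \<open>R/I\<close>; since \<open>R\<close> is regular, every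
  nonzero principal right ideal of \<open>R/I\<close> is generated by an idempotent. Together they show that
  \<open>R/I\<close> acts faithfully on its socle: if \<open>a M \<subseteq> I\<close> for every \<open>M\<close> simple over \<open>I\<close>, then \<open>a \<in> I\<close>.

  (i) \<open>\<Longrightarrow>\<close> (ii), (iii): by regularity every homomorphism \<open>M/I \<rightarrow> M'/I\<close> is left
  multiplication by an element. If \<open>R/I\<close> is commutative, every right ideal containing \<open>I\<close> is
  two-sided, so isomorphic simple subquotients coincide (all \<open>n\<^sub>\<alpha>\<^sub>\<beta> = 1\<close>) and the
  endomorphism rings \<open>K\<^sub>\<alpha>\<^sub>\<beta>\<close> are commutative.
  Left multiplication embeds \<open>R/I\<close> into \<open>\<Prod>\<^sub>\<beta> K\<^sub>\<alpha>\<^sub>\<beta>\<close> by faithfulness; idempotent generators of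
  distinct simple subquotients annihilate each other, which makes every finitely supported family
  an image, and each factor \<open>K\<^sub>\<alpha>\<^sub>\<beta>\<close> a minimal right ideal of the image.

  (ii) \<open>\<Longrightarrow>\<close> (i): the primitive factor \<open>R/ann(M/I)\<close> is artinian, so the homogeneous component of
  \<open>M/I\<close> has finite length, and \<open>n\<^sub>\<alpha>\<^sub>\<beta> = 1\<close> forces it to be \<open>M\<close> itself. Hence \<open>M\<close> is stable under
  left multiplications, which are endomorphisms of \<open>M/I\<close>; as these commute, \<open>(ab - ba) M \<subseteq> I\<close>
  for all such \<open>M\<close>, and faithfulness gives \<open>ab - ba \<in> I\<close>.
  (iii) \<open>\<Longrightarrow>\<close> (i) holds because subrings of products of commutative rings are commutative.
\<close>

no_notation Sum_Type.Plus (infixr \<open><+>\<close> 65)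

section \<open>Right ideals\<close>

context ring
begin

lemma right_ideal_iff:
  "right_ideal R J \<longleftrightarrow> J \<subseteq> carrier R \<and> \<zero> \<in> J \<and> (\<forall>x\<in>J. \<forall>y\<in>J. x \<oplus> y \<in> J)
     \<and> (\<forall>x\<in>J. \<ominus> x \<in> J) \<and> (\<forall>x\<in>J. \<forall>r\<in>carrier R. x \<otimes> r \<in> J)"
proof
  assume "right_ideal R J"
  then interpret additive_subgroup J R by (simp add: right_ideal_def)
  show "J \<subseteq> carrier R \<and> \<zero> \<in> J \<and> (\<forall>x\<in>J. \<forall>y\<in>J. x \<oplus> y \<in> J)
     \<and> (\<forall>x\<in>J. \<ominus> x \<in> J) \<and> (\<forall>x\<in>J. \<forall>r\<in>carrier R. x \<otimes> r \<in> J)"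
    using \<open>right_ideal R J\<close> a_subset by (auto simp: right_ideal_def)
next
  assume A: "J \<subseteq> carrier R \<and> \<zero> \<in> J \<and> (\<forall>x\<in>J. \<forall>y\<in>J. x \<oplus> y \<in> J)
     \<and> (\<forall>x\<in>J. \<ominus> x \<in> J) \<and> (\<forall>x\<in>J. \<forall>r\<in>carrier R. x \<otimes> r \<in> J)"
  have "subgroup J (add_monoid R)"
    using A by (auto intro!: subgroup.intro simp: a_inv_def[symmetric])
  then show "right_ideal R J" using A
    by (auto simp: right_ideal_def additive_subgroup_def)
qed

lemma right_idealD:
  assumes "right_ideal R J"
  shows "J \<subseteq> carrier R" "\<zero> \<in> J" "\<And>x y. x \<in> J \<Longrightarrow> y \<in> J \<Longrightarrow> x \<oplus> y \<in> J"
    "\<And>x. x \<in> J \<Longrightarrow> \<ominus> x \<in> J" "\<And>x r. x \<in> J \<Longrightarrow> r \<in> carrier R \<Longrightarrow> x \<otimes> r \<in> J"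
  using assms unfolding right_ideal_iff by auto

lemma right_ideal_mem_carrier: "right_ideal R J \<Longrightarrow> x \<in> J \<Longrightarrow> x \<in> carrier R"
  using right_idealD(1) by blast

lemma right_ideal_minus_closed: "right_ideal R J \<Longrightarrow> x \<in> J \<Longrightarrow> y \<in> J \<Longrightarrow> x \<ominus> y \<in> J"
  by (simp add: minus_eq right_idealD(3,4))

lemma right_ideal_minus_cancel:
  assumes J: "right_ideal R J" and x: "x \<in> carrier R" and y: "y \<in> J" and xy: "x \<ominus> y \<in> J"
  shows "x \<in> J"
proof -
  have "(x \<ominus> y) \<oplus> y = x" using x right_ideal_mem_carrier[OF J y]
    by (simp add: minus_eq a_assoc l_neg)
  then show ?thesis using right_idealD(3)[OF J xy y] by simp
qed

lemma right_ideal_add_cancel: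
  assumes J: "right_ideal R J" and x: "x \<in> carrier R" and y: "y \<in> J" and xy: "x \<oplus> y \<in> J"
  shows "x \<in> J"
proof -
  have "(x \<oplus> y) \<ominus> y = x" using x right_ideal_mem_carrier[OF J y]
    by (simp add: minus_eq a_assoc r_neg)
  then show ?thesis using right_ideal_minus_closed[OF J xy y] by simp
qed

lemma right_ideal_carrier: "right_ideal R (carrier R)"
  unfolding right_ideal_iff by auto

lemma right_ideal_Int: "right_ideal R A \<Longrightarrow> right_ideal R B \<Longrightarrow> right_ideal R (A \<inter> B)"
  unfolding right_ideal_iff by auto

lemma right_ideal_Inter: "F \<noteq> {} \<Longrightarrow> (\<And>J. J \<in> F \<Longrightarrow> right_ideal R J) \<Longrightarrow> right_ideal R (\<Inter>F)"
  unfolding right_ideal_iff by blast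

lemma ideal_right_ideal: "ideal I R \<Longrightarrow> right_ideal R I"
  unfolding right_ideal_def by (auto simp: ideal_def ideal_axioms_def)

lemma ideal_of_right_ideal:
  assumes "right_ideal R J" and "\<And>x a. x \<in> J \<Longrightarrow> a \<in> carrier R \<Longrightarrow> a \<otimes> x \<in> J"
  shows "ideal J R"
  using assms right_idealD(5)[OF assms(1)]
  by (intro idealI ring_axioms) (auto simp: right_ideal_def additive_subgroup_def)

lemma set_add_iff: "x \<in> A <+> B \<longleftrightarrow> (\<exists>a\<in>A. \<exists>b\<in>B. x = a \<oplus> b)"
  by (auto simp: set_add_def')

lemma set_add_mono: "A \<subseteq> A' \<Longrightarrow> B \<subseteq> B' \<Longrightarrow> A <+> B \<subseteq> A' <+> B'"
  by (force simp: set_add_iff)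

lemma set_add_assoc:
  "A \<subseteq> carrier R \<Longrightarrow> B \<subseteq> carrier R \<Longrightarrow> C \<subseteq> carrier R \<Longrightarrow> (A <+> B) <+> C = A <+> (B <+> C)"
  unfolding set_add_def by (rule add.set_mult_assoc) auto

lemma right_ideal_set_add:
  assumes A: "right_ideal R A" and B: "right_ideal R B"
  shows "right_ideal R (A <+> B)"
proof -
  have "x \<otimes> r \<in> A <+> B" if x: "x \<in> A <+> B" and r: "r \<in> carrier R" for x r
  proof -
    obtain p q where pq: "p \<in> A" "q \<in> B" "x = p \<oplus> q" using x by (auto simp: set_add_iff)
    have "x \<otimes> r = p \<otimes> r \<oplus> q \<otimes> r"
      using pq r A B by (simp add: l_distr right_ideal_mem_carrier)
    moreover have "p \<otimes> r \<in> A" "q \<otimes> r \<in> B" using pq r A B right_idealD(5) by blast+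
    ultimately show ?thesis by (auto simp: set_add_iff)
  qed
  moreover have "additive_subgroup (A <+> B) R"
    using A B add_additive_subgroups by (simp add: right_ideal_def)
  ultimately show ?thesis by (simp add: right_ideal_def)
qed

lemma set_add_upper1: "right_ideal R A \<Longrightarrow> right_ideal R B \<Longrightarrow> A \<subseteq> A <+> B"
  by (force simp: set_add_iff dest: right_idealD(2) right_ideal_mem_carrier
      intro: r_zero[symmetric])

lemma set_add_upper2: "right_ideal R A \<Longrightarrow> right_ideal R B \<Longrightarrow> B \<subseteq> A <+> B"
  by (force simp: set_add_iff dest: right_idealD(2) right_ideal_mem_carrier
      intro: l_zero[symmetric])

lemma set_add_least: "right_ideal R C \<Longrightarrow> A \<subseteq> C \<Longrightarrow> B \<subseteq> C \<Longrightarrow> A <+> B \<subseteq> C"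
  using right_idealD(3)[of C] by (force simp: set_add_iff)

lemma set_add_absorb1: "right_ideal R A \<Longrightarrow> right_ideal R B \<Longrightarrow> B \<subseteq> A \<Longrightarrow> A <+> B = A"
  by (meson set_add_least set_add_upper1 order_refl subset_antisym)

lemma set_add_absorb2: "right_ideal R A \<Longrightarrow> right_ideal R B \<Longrightarrow> A \<subseteq> B \<Longrightarrow> A <+> B = B"
  by (meson set_add_least set_add_upper2 order_refl subset_antisym)

lemma right_ideal_modular:
  assumes A: "right_ideal R A" and B: "right_ideal R B" and C: "right_ideal R C" and AC: "A \<subseteq> C"
  shows "C \<inter> (A <+> B) = A <+> (C \<inter> B)"
proof
  show "C \<inter> (A <+> B) \<subseteq> A <+> (C \<inter> B)"
  proof
    fix x assume "x \<in> C \<inter> (A <+> B)"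
    then obtain a b where ab: "x \<in> C" "a \<in> A" "b \<in> B" "x = a \<oplus> b" by (auto simp: set_add_iff)
    have ca: "a \<in> carrier R" "b \<in> carrier R"
      using ab right_ideal_mem_carrier[OF A] right_ideal_mem_carrier[OF B] by auto
    have "x \<ominus> a = (b \<oplus> a) \<ominus> a" using ab ca by (simp add: a_comm)
    then have "b = x \<ominus> a" using ca by (simp add: minus_eq a_assoc r_neg)
    then have "b \<in> C" using ab AC right_ideal_minus_closed[OF C] by blast
    then show "x \<in> A <+> (C \<inter> B)" using ab by (auto simp: set_add_iff)
  qed
  show "A <+> (C \<inter> B) \<subseteq> C \<inter> (A <+> B)"
    using set_add_least[OF C] AC set_add_mono[of A A "C \<inter> B" B] by blast
qed

lemma right_ideal_left_preimage:
  assumes M: "right_ideal R M" and J: "right_ideal R J" and a: "a \<in> carrier R"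
  shows "right_ideal R {m \<in> M. a \<otimes> m \<in> J}"
  unfolding right_ideal_iff
proof (intro conjI ballI)
  show "{m \<in> M. a \<otimes> m \<in> J} \<subseteq> carrier R" using right_idealD(1)[OF M] by blast
  show "\<zero> \<in> {m \<in> M. a \<otimes> m \<in> J}" using right_idealD(2)[OF M] right_idealD(2)[OF J] a by simp
  fix x assume x: "x \<in> {m \<in> M. a \<otimes> m \<in> J}"
  then have xc: "x \<in> carrier R" using right_ideal_mem_carrier[OF M] by blast
  show "x \<oplus> y \<in> {m \<in> M. a \<otimes> m \<in> J}" if y: "y \<in> {m \<in> M. a \<otimes> m \<in> J}" for y
    using x y a xc right_idealD(3)[OF M] right_idealD(3)[OF J] right_ideal_mem_carrier[OF M]
    by (auto simp: r_distr)
  show "\<ominus> x \<in> {m \<in> M. a \<otimes> m \<in> J}"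
    using x a xc right_idealD(4)[OF M] right_idealD(4)[OF J] by (auto simp: r_minus)
  show "x \<otimes> r \<in> {m \<in> M. a \<otimes> m \<in> J}" if r: "r \<in> carrier R" for r
    using x a xc r right_idealD(5)[OF M] right_idealD(5)[OF J] by (auto simp: m_assoc[symmetric])
qed

lemma right_ideal_left_image:
  assumes M: "right_ideal R M" and a: "a \<in> carrier R"
  shows "right_ideal R ((\<otimes>) a ` M)"
  unfolding right_ideal_iff
proof (intro conjI ballI)
  have mc: "\<And>m. m \<in> M \<Longrightarrow> m \<in> carrier R" using right_ideal_mem_carrier[OF M] .
  show "(\<otimes>) a ` M \<subseteq> carrier R" using mc a by auto
  show "\<zero> \<in> (\<otimes>) a ` M" using right_idealD(2)[OF M] a r_null by (metis image_eqI)
  fix x assume "x \<in> (\<otimes>) a ` M"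
  then obtain m where m: "m \<in> M" "x = a \<otimes> m" by blast
  show "x \<oplus> y \<in> (\<otimes>) a ` M" if "y \<in> (\<otimes>) a ` M" for y
  proof -
    obtain n where n: "n \<in> M" "y = a \<otimes> n" using \<open>y \<in> (\<otimes>) a ` M\<close> by blast
    have "x \<oplus> y = a \<otimes> (m \<oplus> n)" using m n mc a by (simp add: r_distr)
    then show ?thesis using right_idealD(3)[OF M m(1) n(1)] by blast
  qed
  have "\<ominus> x = a \<otimes> (\<ominus> m)" using m mc a by (simp add: r_minus)
  then show "\<ominus> x \<in> (\<otimes>) a ` M" using right_idealD(4)[OF M m(1)] by blast
  show "x \<otimes> r \<in> (\<otimes>) a ` M" if r: "r \<in> carrier R" for r
  proof -
    have "x \<otimes> r = a \<otimes> (m \<otimes> r)" using m mc a r by (simp add: m_assoc)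
    then show ?thesis using right_idealD(5)[OF M m(1) r] by blast
  qed
qed

lemma principal_right_ideal_over:
  assumes I: "right_ideal R I" and x: "x \<in> carrier R"
  defines "Ix \<equiv> I <+> (\<otimes>) x ` carrier R"
  shows "right_ideal R Ix" "I \<subseteq> Ix" "x \<in> Ix"
    and "\<And>J. right_ideal R J \<Longrightarrow> I \<subseteq> J \<Longrightarrow> x \<in> J \<Longrightarrow> Ix \<subseteq> J"
proof -
  have xR: "right_ideal R ((\<otimes>) x ` carrier R)"
    by (rule right_ideal_left_image[OF right_ideal_carrier x])
  show "right_ideal R Ix" "I \<subseteq> Ix" unfolding Ix_def
    by (fact right_ideal_set_add[OF I xR], fact set_add_upper1[OF I xR])
  show "x \<in> Ix" unfolding Ix_def using set_add_upper2[OF I xR] x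
    by (metis image_eqI r_one one_closed subsetD)
  show "Ix \<subseteq> J" if J: "right_ideal R J" "I \<subseteq> J" "x \<in> J" for J
    unfolding Ix_def using set_add_least[OF J(1) J(2)] right_idealD(5)[OF J(1) J(3)] by blast
qed

end

section \<open>Congruence modulo an ideal\<close>

context ring
begin

definition cong_mod :: "'a set \<Rightarrow> 'a \<Rightarrow> 'a \<Rightarrow> bool" where
  "cong_mod I x y \<longleftrightarrow> x \<in> carrier R \<and> y \<in> carrier R \<and> x \<ominus> y \<in> I"

lemma cong_mod_carrier: "cong_mod I x y \<Longrightarrow> x \<in> carrier R" "cong_mod I x y \<Longrightarrow> y \<in> carrier R"
  by (auto simp: cong_mod_def)

lemma cong_mod_zero_iff: "x \<in> carrier R \<Longrightarrow> cong_mod I x \<zero> \<longleftrightarrow> x \<in> I"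
  by (simp add: cong_mod_def minus_eq)

lemma a_rcos_eq_iff_cong_mod:
  "ideal I R \<Longrightarrow> a \<in> carrier R \<Longrightarrow> b \<in> carrier R \<Longrightarrow> I +> a = I +> b \<longleftrightarrow> cong_mod I a b"
  by (simp add: cong_mod_def quotient_eq_iff_same_a_r_cos)

context
  fixes I assumes i: "ideal I R"
begin

private lemma I_add: "x \<in> I \<Longrightarrow> y \<in> I \<Longrightarrow> x \<oplus> y \<in> I"
  and I_neg: "x \<in> I \<Longrightarrow> \<ominus> x \<in> I"
  and I_carrier: "x \<in> I \<Longrightarrow> x \<in> carrier R"
  using right_idealD[OF ideal_right_ideal[OF i]] by auto

lemma cong_mod_refl: "x \<in> carrier R \<Longrightarrow> cong_mod I x x"
  using right_idealD(2)[OF ideal_right_ideal[OF i]] by (simp add: cong_mod_def minus_eq r_neg)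

lemma cong_mod_sym: "cong_mod I x y \<Longrightarrow> cong_mod I y x"
  using I_neg[of "x \<ominus> y"] by (simp add: cong_mod_def minus_eq minus_add a_comm)

lemma cong_mod_trans: "cong_mod I x y \<Longrightarrow> cong_mod I y z \<Longrightarrow> cong_mod I x z"
  using I_add[of "x \<ominus> y" "y \<ominus> z"] by (simp add: cong_mod_def minus_eq a_assoc r_neg1)

lemma cong_mod_add: "cong_mod I x y \<Longrightarrow> cong_mod I x' y' \<Longrightarrow> cong_mod I (x \<oplus> x') (y \<oplus> y')"
  using I_add[of "x \<ominus> y" "x' \<ominus> y'"] by (simp add: cong_mod_def minus_eq minus_add a_ac)

lemma cong_mod_neg: "cong_mod I x y \<Longrightarrow> cong_mod I (\<ominus> x) (\<ominus> y)"
  using I_neg[of "x \<ominus> y"] by (simp add: cong_mod_def minus_eq minus_add)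

lemma cong_mod_minus: "cong_mod I x y \<Longrightarrow> cong_mod I x' y' \<Longrightarrow> cong_mod I (x \<ominus> x') (y \<ominus> y')"
  by (simp add: minus_eq cong_mod_add cong_mod_neg)

lemma cong_mod_mult_left: "a \<in> carrier R \<Longrightarrow> cong_mod I x y \<Longrightarrow> cong_mod I (a \<otimes> x) (a \<otimes> y)"
  using ideal.I_l_closed[OF i, of "x \<ominus> y" a] by (simp add: cong_mod_def minus_eq r_distr r_minus)

lemma cong_mod_mult_right: "a \<in> carrier R \<Longrightarrow> cong_mod I x y \<Longrightarrow> cong_mod I (x \<otimes> a) (y \<otimes> a)"
  using ideal.I_r_closed[OF i, of "x \<ominus> y" a] by (simp add: cong_mod_def minus_eq l_distr l_minus)

lemma cong_mod_in_ideal: "x \<in> I \<Longrightarrow> y \<in> I \<Longrightarrow> cong_mod I x y"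
  using I_add I_neg I_carrier by (simp add: cong_mod_def minus_eq)

lemma cong_mod_zeroI: "x \<in> I \<Longrightarrow> cong_mod I x \<zero>"
  using I_carrier cong_mod_zero_iff by blast

lemma cong_mod_mem: "cong_mod I x y \<Longrightarrow> y \<in> I \<Longrightarrow> x \<in> I"
  by (meson cong_mod_carrier(1) cong_mod_trans cong_mod_zeroI cong_mod_zero_iff)

lemma cong_mod_add_ideal: "x \<in> carrier R \<Longrightarrow> j \<in> I \<Longrightarrow> cong_mod I (x \<oplus> j) x"
  using cong_mod_add[OF cong_mod_refl cong_mod_zeroI, of x j] by simp

lemma commutative_ring_Quot_iff:
  "commutative_ring (R Quot I) \<longleftrightarrow> (\<forall>a\<in>carrier R. \<forall>b\<in>carrier R. cong_mod I (a \<otimes> b) (b \<otimes> a))"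
proof -
  interpret I: ideal I R by (rule i)
  have "commutative_ring (R Quot I) \<longleftrightarrow>
      (\<forall>a\<in>carrier R. \<forall>b\<in>carrier R. I +> (a \<otimes> b) = I +> (b \<otimes> a))"
    unfolding commutative_ring_def by (simp add: FactRing_def A_RCOSETS_def' I.rcoset_mult_add)
  then show ?thesis using a_rcos_eq_iff_cong_mod[OF i] by simp
qed

end

end

section \<open>Simple subquotients\<close>

lemma minimal_overD:
  assumes "minimal_over R I M"
  shows minimal_over_right_ideal: "right_ideal R M"
    and minimal_over_right_ideal_base: "right_ideal R I"
    and minimal_over_subset: "I \<subseteq> M"
    and minimal_over_neq: "I \<noteq> M"
  using assms by (auto simp: minimal_over_def)

lemma minimal_over_between:
  "minimal_over R I M \<Longrightarrow> right_ideal R J \<Longrightarrow> I \<subseteq> J \<Longrightarrow> J \<subseteq> M \<Longrightarrow> J = I \<or> J = M"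
  by (auto simp: minimal_over_def)

lemma minimal_overI:
  assumes "right_ideal R I" "right_ideal R M" "I \<subseteq> M" "M \<noteq> I"
    and "\<And>J. right_ideal R J \<Longrightarrow> I \<subseteq> J \<Longrightarrow> J \<subseteq> M \<Longrightarrow> J = I \<or> J = M"
  shows "minimal_over R I M"
  using assms unfolding minimal_over_def by blast

context ring
begin

lemma minimal_over_mem_carrier: "minimal_over R I M \<Longrightarrow> x \<in> M \<Longrightarrow> x \<in> carrier R"
  using right_ideal_mem_carrier[OF minimal_over_right_ideal] .

lemma between_minimal_set_add:
  assumes M: "minimal_over R T M" and S: "right_ideal R S" "T \<subseteq> S"
    and J: "right_ideal R J" "S \<subseteq> J" "J \<subseteq> M <+> S"
  shows "J = S \<or> J = M <+> S"
proof -
  note rM = minimal_over_right_ideal[OF M] and rT = minimal_over_right_ideal_base[OF M]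
  have "J \<inter> M = T \<or> J \<inter> M = M"
    using minimal_over_between[OF M right_ideal_Int[OF J(1) rM]] J S minimal_over_subset[OF M]
    by blast
  then show ?thesis
  proof
    assume JM: "J \<inter> M = T"
    have "J = J \<inter> (S <+> M)"
      using J set_add_comm[of M S] right_idealD(1)[OF S(1)] right_idealD(1)[OF rM] by auto
    also have "\<dots> = S <+> (J \<inter> M)" using right_ideal_modular[OF S(1) rM J(1) J(2)] .
    also have "\<dots> = S" using JM set_add_absorb1[OF S(1) rT S(2)] by simp
    finally show ?thesis ..
  next
    assume "J \<inter> M = M"
    then show ?thesis using J set_add_least by blast
  qed
qed

lemma minimal_over_set_add_cases:
  assumes M: "minimal_over R T M" and S: "right_ideal R S" "T \<subseteq> S"
  shows "M \<subseteq> S \<or> minimal_over R S (M <+> S)"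
proof (cases "M \<subseteq> S")
  case False
  note rM = minimal_over_right_ideal[OF M]
  have "M <+> S \<noteq> S" using False set_add_upper1[OF rM S(1)] by blast
  then have "minimal_over R S (M <+> S)"
    using S set_add_upper2[OF rM S(1)] right_ideal_set_add[OF rM S(1)]
      between_minimal_set_add[OF M S] by (intro minimal_overI) auto
  then show ?thesis ..
qed simp

text \<open>The isomorphism \<open>N/I \<cong> (N + S)/S\<close> for \<open>N \<inter> S = I\<close> transports simplicity.\<close>

lemma minimal_over_diamond:
  assumes K: "minimal_over R S K" and N: "right_ideal R N" "I \<subseteq> N"
    and I: "right_ideal R I" "I \<subseteq> S" and NS: "N \<inter> S = I" and NK: "N <+> S = K"
  shows "minimal_over R I N"
proof (rule minimal_overI)
  note rS = minimal_over_right_ideal_base[OF K]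
  show "N \<noteq> I"
  proof
    assume "N = I"
    then have "K = S" using NK set_add_absorb2[OF I(1) rS I(2)] by simp
    then show False using minimal_over_neq[OF K] by simp
  qed
  fix J assume J: "right_ideal R J" "I \<subseteq> J" "J \<subseteq> N"
  have "S \<subseteq> J <+> S" "J <+> S \<subseteq> K"
    using set_add_upper2[OF J(1) rS] set_add_mono[OF J(3) order_refl, of S] NK by auto
  then have "J <+> S = S \<or> J <+> S = K"
    using minimal_over_between[OF K right_ideal_set_add[OF J(1) rS]] by blast
  then show "J = I \<or> J = N"
  proof
    assume "J <+> S = S"
    then show ?thesis using set_add_upper1[OF J(1) rS] J NS by blast
  next
    assume "J <+> S = K"
    then have "N = N \<inter> (J <+> S)" using NK set_add_upper1[OF N(1) rS] by blast
    also have "\<dots> = J <+> (N \<inter> S)" using right_ideal_modular[OF J(1) rS N(1) J(3)] .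
    also have "\<dots> = J" using NS set_add_absorb1[OF J(1) I(1) J(2)] by simp
    finally show ?thesis by blast
  qed
qed (use I N in auto)

lemma minimal_over_generated:
  assumes M: "minimal_over R I M" and x: "x \<in> M" "x \<notin> I"
  shows "I <+> (\<otimes>) x ` carrier R = M"
proof -
  note X = principal_right_ideal_over[OF minimal_over_right_ideal_base[OF M]
    minimal_over_mem_carrier[OF M x(1)]]
  have "I <+> (\<otimes>) x ` carrier R \<subseteq> M"
    using X(4)[OF minimal_over_right_ideal[OF M] minimal_over_subset[OF M] x(1)] .
  then show ?thesis using minimal_over_between[OF M X(1,2)] X(3) x(2) by blast
qed

lemma minimal_over_generator_factor:
  assumes M: "minimal_over R I M" and y: "y \<in> M" "y \<notin> I" and x: "x \<in> M"
  obtains p d where "p \<in> I" "d \<in> carrier R" "y \<otimes> d = x \<ominus> p"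
proof -
  obtain p d where pd: "p \<in> I" "d \<in> carrier R" "x = p \<oplus> y \<otimes> d"
    using x minimal_over_generated[OF M y] by (auto simp: set_add_iff)
  have c: "p \<in> carrier R" "y \<otimes> d \<in> carrier R"
    using pd minimal_over_right_ideal_base[OF M] right_ideal_mem_carrier
      minimal_over_mem_carrier[OF M y(1)]
    by auto
  then have "x \<ominus> p = (y \<otimes> d \<oplus> p) \<ominus> p" using pd(3) by (simp add: a_comm)
  then have "y \<otimes> d = x \<ominus> p" using c by (simp add: minus_eq a_assoc r_neg)
  then show ?thesis using that pd by blast
qed

lemma minimal_over_Int:
  assumes M: "minimal_over R I M" and M': "minimal_over R I M'" and ne: "M \<noteq> M'"
  shows "M \<inter> M' = I"
proof -
  have rMM': "right_ideal R (M \<inter> M')"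
    using right_ideal_Int[OF minimal_over_right_ideal[OF M] minimal_over_right_ideal[OF M']] .
  have "I \<subseteq> M \<inter> M'" using minimal_over_subset[OF M] minimal_over_subset[OF M'] by blast
  then have "M \<inter> M' = I \<or> M \<inter> M' = M" "M \<inter> M' = I \<or> M \<inter> M' = M'"
    using minimal_over_between[OF M rMM'] minimal_over_between[OF M' rMM'] by auto
  then show ?thesis using ne by blast
qed

context
  fixes I M a
  assumes i: "ideal I R" and M: "minimal_over R I M" and a: "a \<in> carrier R"
    and ker: "\<And>m. m \<in> M \<Longrightarrow> a \<otimes> m \<in> I \<Longrightarrow> m \<in> I"
begin

private lemma rI: "right_ideal R I" and rM: "right_ideal R M" and IM: "I \<subseteq> M"
  and raM: "right_ideal R ((\<otimes>) a ` M)" and mc: "\<And>x. x \<in> M \<Longrightarrow> x \<in> carrier R"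
  using minimal_overD[OF M] right_ideal_left_image[OF minimal_over_right_ideal[OF M] a]
    minimal_over_mem_carrier[OF M] by auto

lemma minimal_over_left_mult_image: "minimal_over R I (I <+> (\<otimes>) a ` M)"
proof (rule minimal_overI)
  obtain m0 where "m0 \<in> M" "m0 \<notin> I" using IM minimal_over_neq[OF M] by blast
  then show "I <+> (\<otimes>) a ` M \<noteq> I" using ker set_add_upper2[OF rI raM] by blast
next
  fix J assume J: "right_ideal R J" "I \<subseteq> J" "J \<subseteq> I <+> (\<otimes>) a ` M"
  define P where "P = {m \<in> M. a \<otimes> m \<in> J}"
  have "right_ideal R P" "I \<subseteq> P" "P \<subseteq> M"
    unfolding P_def using right_ideal_left_preimage[OF rM J(1) a] IM J(2) ideal.I_l_closed[OF i _ a]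
    by auto
  then consider "P = I" | "P = M" using minimal_over_between[OF M] by blast
  then show "J = I \<or> J = I <+> (\<otimes>) a ` M"
  proof cases
    case 1
    have "y \<in> I" if y: "y \<in> J" for y
    proof -
      have "y \<in> I <+> (\<otimes>) a ` M" using y J(3) by blast
      then obtain p m where pm: "p \<in> I" "m \<in> M" "y = p \<oplus> a \<otimes> m"
        by (auto simp: set_add_iff)
      have "a \<otimes> m \<oplus> p \<in> J" using y pm a mc right_ideal_mem_carrier[OF rI] by (simp add: a_comm)
      then have "a \<otimes> m \<in> J" using right_ideal_add_cancel[OF J(1)] pm J(2) a mc by blast
      then have "a \<otimes> m \<in> I" using 1 pm(2) ideal.I_l_closed[OF i _ a] unfolding P_def by blast
      then show ?thesis using pm right_idealD(3)[OF rI] by simp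
    qed
    then show ?thesis using J(2) by blast
  next
    case 2
    then have "(\<otimes>) a ` M \<subseteq> J" unfolding P_def by blast
    then show ?thesis using set_add_least[OF J(1) J(2)] J(3) by blast
  qed
qed (use rI right_ideal_set_add[OF rI raM] set_add_upper1[OF rI raM] in auto)

private lemma left_mult_image_cong:
  assumes "y \<in> I <+> (\<otimes>) a ` M" shows "\<exists>m. m \<in> M \<and> cong_mod I y (a \<otimes> m)"
proof -
  obtain p m where pm: "p \<in> I" "m \<in> M" "y = p \<oplus> a \<otimes> m" using assms by (auto simp: set_add_iff)
  then have "y = a \<otimes> m \<oplus> p" using a mc right_ideal_mem_carrier[OF rI] by (simp add: a_comm)
  then show ?thesis using pm cong_mod_add_ideal[OF i _ pm(1), of "a \<otimes> m"] a mc by auto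
qed

private lemma left_mult_inj: "x \<in> M \<Longrightarrow> y \<in> M \<Longrightarrow> cong_mod I (a \<otimes> x) (a \<otimes> y) \<Longrightarrow> cong_mod I x y"
  using ker[of "x \<ominus> y"] right_ideal_minus_closed[OF rM] mc a
  by (simp add: cong_mod_def r_minus r_distr minus_eq)

private lemma left_mult_mod_hom: "mod_hom R I M I (I <+> (\<otimes>) a ` M) ((\<otimes>) a)"
  unfolding mod_hom_def
proof (intro conjI ballI)
  show "a \<otimes> x \<in> I <+> (\<otimes>) a ` M" if "x \<in> M" for x using set_add_upper2[OF rI raM] that by blast
  show "a \<otimes> x \<in> I" if "x \<in> I" for x using ideal.I_l_closed[OF i that a] .
  show "a \<otimes> (x \<oplus> y) \<ominus> (a \<otimes> x \<oplus> a \<otimes> y) \<in> I" if "x \<in> M" "y \<in> M" for x y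
    using right_idealD(2)[OF rI] a mc that by (simp add: r_distr minus_eq r_neg)
  show "a \<otimes> (x \<otimes> r) \<ominus> a \<otimes> x \<otimes> r \<in> I" if "x \<in> M" "r \<in> carrier R" for x r
    using right_idealD(2)[OF rI] a mc that by (simp add: m_assoc minus_eq r_neg)
qed

private lemma left_mult_inverse_mod_hom:
  assumes g: "\<And>y. y \<in> I <+> (\<otimes>) a ` M \<Longrightarrow> g y \<in> M"
    "\<And>y. y \<in> I <+> (\<otimes>) a ` M \<Longrightarrow> cong_mod I (a \<otimes> g y) y"
  shows "mod_hom R I (I <+> (\<otimes>) a ` M) I M g"
  unfolding mod_hom_def
proof (intro conjI ballI)
  define A where "A = I <+> (\<otimes>) a ` M"
  have rA: "right_ideal R A" unfolding A_def by (rule right_ideal_set_add[OF rI raM])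
  have gc: "g y \<in> carrier R" if "y \<in> A" for y using g(1) that mc unfolding A_def by blast
  show "g x \<in> M" if "x \<in> I <+> (\<otimes>) a ` M" for x using g(1)[OF that] .
  show "g x \<in> I" if x: "x \<in> I" for x
  proof -
    have xA: "x \<in> A" using set_add_upper1[OF rI raM] x unfolding A_def by blast
    have "cong_mod I (a \<otimes> g x) (a \<otimes> \<zero>)"
      using cong_mod_trans[OF i g(2) cong_mod_zeroI[OF i x]] xA a unfolding A_def by simp
    then have "cong_mod I (g x) \<zero>" using left_mult_inj g(1) xA right_idealD(2)[OF rM] A_def by blast
    then show "g x \<in> I" using cong_mod_zero_iff gc[OF xA] by blast
  qed
  fix x assume x: "x \<in> I <+> (\<otimes>) a ` M"
  show "g (x \<oplus> y) \<ominus> (g x \<oplus> g y) \<in> I" if y: "y \<in> I <+> (\<otimes>) a ` M" for y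
  proof -
    have xy: "x \<oplus> y \<in> A" using right_idealD(3)[OF rA] x y unfolding A_def by blast
    have "cong_mod I (a \<otimes> g (x \<oplus> y)) (a \<otimes> (g x \<oplus> g y))"
      using cong_mod_trans[OF i g(2) cong_mod_sym[OF i cong_mod_add[OF i g(2)[OF x] g(2)[OF y]]]]
        xy gc x y a unfolding A_def by (simp add: r_distr)
    then have "cong_mod I (g (x \<oplus> y)) (g x \<oplus> g y)"
      using left_mult_inj g(1) xy right_idealD(3)[OF rM g(1)[OF x] g(1)[OF y]] A_def by blast
    then show ?thesis by (simp add: cong_mod_def)
  qed
  show "g (x \<otimes> r) \<ominus> g x \<otimes> r \<in> I" if r: "r \<in> carrier R" for r
  proof -
    have xr: "x \<otimes> r \<in> A" using right_idealD(5)[OF rA] x r unfolding A_def by blast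
    have "cong_mod I (a \<otimes> g (x \<otimes> r)) (a \<otimes> (g x \<otimes> r))"
      using cong_mod_trans[OF i g(2) cong_mod_sym[OF i cong_mod_mult_right[OF i r g(2)[OF x]]]]
        xr gc x r a unfolding A_def by (simp add: m_assoc)
    then have "cong_mod I (g (x \<otimes> r)) (g x \<otimes> r)"
      using left_mult_inj g(1) xr right_idealD(5)[OF rM g(1)[OF x] r] A_def by blast
    then show ?thesis by (simp add: cong_mod_def)
  qed
qed

lemma mod_iso_left_mult: "mod_iso R I M I (I <+> (\<otimes>) a ` M)"
proof -
  define g where "g y = (SOME m. m \<in> M \<and> cong_mod I y (a \<otimes> m))" for y
  have g: "g y \<in> M" "cong_mod I (a \<otimes> g y) y" if "y \<in> I <+> (\<otimes>) a ` M" for y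
  proof -
    have "g y \<in> M \<and> cong_mod I y (a \<otimes> g y)"
      unfolding g_def by (rule someI_ex, rule left_mult_image_cong[OF that])
    then show "g y \<in> M" "cong_mod I (a \<otimes> g y) y" using cong_mod_sym[OF i] by auto
  qed
  have "g (a \<otimes> x) \<ominus> x \<in> I" if x: "x \<in> M" for x
  proof -
    have ax: "a \<otimes> x \<in> I <+> (\<otimes>) a ` M" using set_add_upper2[OF rI raM] x by blast
    then have "cong_mod I (g (a \<otimes> x)) x" using left_mult_inj g(1)[OF ax] g(2)[OF ax] x by blast
    then show ?thesis by (simp add: cong_mod_def)
  qed
  moreover have "a \<otimes> g y \<ominus> y \<in> I" if "y \<in> I <+> (\<otimes>) a ` M" for y
    using g(2)[OF that] by (simp add: cong_mod_def)
  ultimately show ?thesis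
    unfolding mod_iso_def using left_mult_mod_hom left_mult_inverse_mod_hom[OF g] by blast
qed

end

lemma minimal_over_left_mult_cases:
  assumes i: "ideal I R" and M: "minimal_over R I M" and a: "a \<in> carrier R"
  shows "(\<forall>m\<in>M. a \<otimes> m \<in> I) \<or>
         (minimal_over R I (I <+> (\<otimes>) a ` M) \<and> mod_iso R I M I (I <+> (\<otimes>) a ` M))"
proof -
  define K where "K = {m \<in> M. a \<otimes> m \<in> I}"
  have "right_ideal R K" "I \<subseteq> K" "K \<subseteq> M"
    unfolding K_def using right_ideal_left_preimage[OF minimal_over_right_ideal[OF M]
        ideal_right_ideal[OF i] a] minimal_over_subset[OF M] ideal.I_l_closed[OF i _ a] by auto
  then consider "K = M" | "K = I" using minimal_over_between[OF M] by blast
  then show ?thesis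
  proof cases
    case 2
    then have "\<And>m. m \<in> M \<Longrightarrow> a \<otimes> m \<in> I \<Longrightarrow> m \<in> I" unfolding K_def by blast
    then show ?thesis using minimal_over_left_mult_image[OF i M a] mod_iso_left_mult[OF i M a]
      by blast
  qed (auto simp: K_def)
qed

end

section \<open>The socle sequence\<close>

lemma soc_succ_ge: "I \<subseteq> soc_succ R I"
  unfolding soc_succ_def by blast

lemma minimal_over_subset_soc_succ: "minimal_over R I M \<Longrightarrow> M \<subseteq> soc_succ R I"
  unfolding soc_succ_def by blast

lemma soc_succ_least:
  "right_ideal R J \<Longrightarrow> I \<subseteq> J \<Longrightarrow> (\<And>M. minimal_over R I M \<Longrightarrow> M \<subseteq> J) \<Longrightarrow> soc_succ R I \<subseteq> J"
  unfolding soc_succ_def by blast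

context ring
begin

lemma right_ideal_soc_succ: "right_ideal R I \<Longrightarrow> right_ideal R (soc_succ R I)"
  unfolding soc_succ_def
  by (rule right_ideal_Inter)
    (use right_ideal_carrier right_idealD(1) minimal_over_right_ideal in blast)+

lemma soc_succ_mono:
  assumes T: "right_ideal R T" and I: "right_ideal R I" and TI: "T \<subseteq> I"
  shows "soc_succ R T \<subseteq> soc_succ R I"
proof (rule soc_succ_least)
  show "right_ideal R (soc_succ R I)" by (rule right_ideal_soc_succ[OF I])
  show "T \<subseteq> soc_succ R I" using TI soc_succ_ge[of I R] by blast
  fix M assume M: "minimal_over R T M"
  from minimal_over_set_add_cases[OF M I TI] show "M \<subseteq> soc_succ R I"
  proof
    assume "M \<subseteq> I"
    then show ?thesis using soc_succ_ge[of I R] by blast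
  next
    assume "minimal_over R I (M <+> I)"
    then show ?thesis
      using minimal_over_subset_soc_succ set_add_upper1[OF minimal_over_right_ideal[OF M] I]
        by blast
  qed
qed

lemma ideal_soc_succ:
  assumes i: "ideal I R"
  shows "ideal (soc_succ R I) R"
proof -
  define S where "S = soc_succ R I"
  have rI: "right_ideal R I" using ideal_right_ideal[OF i] .
  have rS: "right_ideal R S" unfolding S_def by (rule right_ideal_soc_succ[OF rI])
  define W where "W = \<Inter>{{x \<in> S. a \<otimes> x \<in> S} | a. a \<in> carrier R}"
  have rW: "right_ideal R W"
    unfolding W_def using right_ideal_left_preimage[OF rS rS] by (intro right_ideal_Inter) auto
  have IW: "I \<subseteq> W"
    unfolding W_def S_def using soc_succ_ge[of I R] ideal.I_l_closed[OF i] by blast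
  have MW: "M \<subseteq> W" if M: "minimal_over R I M" for M
  proof -
    have "a \<otimes> m \<in> S" if a: "a \<in> carrier R" and m: "m \<in> M" for a m
      using minimal_over_left_mult_cases[OF i M a]
    proof
      assume "\<forall>m\<in>M. a \<otimes> m \<in> I"
      then show ?thesis using m soc_succ_ge[of I R] unfolding S_def by blast
    next
      assume "minimal_over R I (I <+> (\<otimes>) a ` M) \<and> mod_iso R I M I (I <+> (\<otimes>) a ` M)"
      then have "I <+> (\<otimes>) a ` M \<subseteq> S" unfolding S_def using minimal_over_subset_soc_succ by blast
      moreover have "a \<otimes> m \<in> I <+> (\<otimes>) a ` M"
        using set_add_upper2[OF rI right_ideal_left_image[OF minimal_over_right_ideal[OF M] a]] m
        by blast
      ultimately show ?thesis by blast
    qed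
    then show ?thesis
      unfolding W_def using minimal_over_subset_soc_succ[OF M] unfolding S_def by blast
  qed
  have "S \<subseteq> W" unfolding S_def using soc_succ_least[OF rW IW MW] .
  then show ?thesis
    using ideal_of_right_ideal[OF rS] unfolding S_def W_def by blast
qed

abbreviation set_add_list :: "'a set list \<Rightarrow> 'a set \<Rightarrow> 'a set" where
  "set_add_list Ms B \<equiv> foldr (\<lambda>M A. M <+> A) Ms B"

lemma right_ideal_set_add_list:
  "right_ideal R B \<Longrightarrow> (\<forall>M\<in>set Ms. right_ideal R M) \<Longrightarrow>
    right_ideal R (set_add_list Ms B) \<and> B \<subseteq> set_add_list Ms B"
proof (induction Ms)
  case (Cons M Ms)
  then have "right_ideal R M" "right_ideal R (set_add_list Ms B)" "B \<subseteq> set_add_list Ms B" by auto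
  then show ?case
    using right_ideal_set_add[of M "set_add_list Ms B"] set_add_upper2[of M "set_add_list Ms B"]
      by auto
qed simp

lemma set_add_list_add:
  assumes B: "right_ideal R B" and IB: "I \<subseteq> B" and I: "right_ideal R I"
  shows "(\<forall>M\<in>set Ms. right_ideal R M) \<Longrightarrow> x \<in> set_add_list Ms I \<Longrightarrow> y \<in> B \<Longrightarrow>
    x \<oplus> y \<in> set_add_list Ms B"
proof (induction Ms arbitrary: x)
  case Nil
  then show ?case using IB right_idealD(3)[OF B] by auto
next
  case (Cons M Ms)
  from Cons.prems obtain m x' where mx: "m \<in> M" "x' \<in> set_add_list Ms I" "x = m \<oplus> x'"
    by (auto simp: set_add_iff)
  have "m \<in> carrier R" "x' \<in> carrier R"
    using mx Cons.prems right_ideal_set_add_list[OF I] right_ideal_mem_carrier by auto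
  then have "x \<oplus> y = m \<oplus> (x' \<oplus> y)"
    using mx(3) Cons.prems(3) right_ideal_mem_carrier[OF B] by (simp add: a_assoc)
  moreover have "x' \<oplus> y \<in> set_add_list Ms B" using Cons mx by simp
  ultimately show ?case using mx(1) by (auto simp: set_add_iff)
qed

lemma right_ideal_sum_simples:
  "right_ideal R I \<Longrightarrow> \<forall>M\<in>set Ms. minimal_over R I M \<Longrightarrow>
    right_ideal R (set_add_list Ms I) \<and> I \<subseteq> set_add_list Ms I"
  by (rule right_ideal_set_add_list) (auto simp: minimal_over_def)

definition simple_sums :: "'a set \<Rightarrow> 'a set" where
  "simple_sums I = {x. \<exists>Ms. (\<forall>M\<in>set Ms. minimal_over R I M) \<and> x \<in> set_add_list Ms I}"

lemma soc_succ_subset_simple_sums: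
  assumes I: "right_ideal R I"
  shows "soc_succ R I \<subseteq> simple_sums I"
proof (rule soc_succ_least)
  have sums: "right_ideal R (set_add_list Ms I)" if "\<forall>M\<in>set Ms. minimal_over R I M" for Ms
    using right_ideal_sum_simples[OF I that] by blast
  show "right_ideal R (simple_sums I)"
    unfolding right_ideal_iff
  proof (intro conjI ballI)
    show "\<zero> \<in> simple_sums I" unfolding simple_sums_def using right_idealD(2)[OF I]
      by (auto intro: exI[of _ "[]"])
    show "simple_sums I \<subseteq> carrier R"
      unfolding simple_sums_def using sums right_ideal_mem_carrier by blast
    fix x assume "x \<in> simple_sums I"
    then obtain Ms where Ms: "\<forall>M\<in>set Ms. minimal_over R I M" "x \<in> set_add_list Ms I"
      unfolding simple_sums_def by blast
    show "\<ominus> x \<in> simple_sums I"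
      using right_idealD(4)[OF sums[OF Ms(1)] Ms(2)] Ms(1) unfolding simple_sums_def by blast
    show "x \<otimes> r \<in> simple_sums I" if "r \<in> carrier R" for r
      using right_idealD(5)[OF sums[OF Ms(1)] Ms(2) that] Ms(1) unfolding simple_sums_def by blast
    show "x \<oplus> y \<in> simple_sums I" if y: "y \<in> simple_sums I" for y
    proof -
      obtain Ns where Ns: "\<forall>M\<in>set Ns. minimal_over R I M" "y \<in> set_add_list Ns I"
        using y unfolding simple_sums_def by blast
      have "x \<oplus> y \<in> set_add_list Ms (set_add_list Ns I)"
        using set_add_list_add[OF sums[OF Ns(1)] _ I _ Ms(2) Ns(2)] Ms(1)
          right_ideal_sum_simples[OF I Ns(1)] minimal_over_right_ideal by blast
      then show ?thesis using Ms(1) Ns(1) unfolding simple_sums_def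
        by (intro CollectI exI[of _ "Ms @ Ns"]) auto
    qed
  qed
  show "I \<subseteq> simple_sums I" unfolding simple_sums_def by (auto intro: exI[of _ "[]"])
  show "M \<subseteq> simple_sums I" if M: "minimal_over R I M" for M
    using set_add_upper1[OF minimal_over_right_ideal[OF M] I] M unfolding simple_sums_def
    by (intro subsetI CollectI exI[of _ "[M]"]) auto
qed

lemma minimal_over_below_set_add_list:
  assumes I: "right_ideal R I"
  shows "(\<forall>M\<in>set Ms. minimal_over R I M) \<Longrightarrow> right_ideal R N \<Longrightarrow> I \<subseteq> N \<Longrightarrow>
    N \<subseteq> set_add_list Ms I \<Longrightarrow> N \<noteq> I \<Longrightarrow> \<exists>M. minimal_over R I M \<and> M \<subseteq> N"
proof (induction Ms arbitrary: N)
  case (Cons M Ms)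
  define S where "S = set_add_list Ms I"
  have rS: "right_ideal R S" and IS: "I \<subseteq> S"
    unfolding S_def using right_ideal_sum_simples[OF I] Cons.prems(1) by auto
  have M: "minimal_over R I M" and rN: "right_ideal R N" and IN: "I \<subseteq> N"
    and NMS: "N \<subseteq> M <+> S" and NI: "N \<noteq> I"
    using Cons.prems unfolding S_def by auto
  show ?case
  proof (cases "N \<inter> S = I")
    case False
    then show ?thesis
      using Cons.IH[of "N \<inter> S"] Cons.prems right_ideal_Int[OF rN rS] IN IS unfolding S_def by auto
  next
    case True
    then have "\<not> N \<subseteq> S" using NI by blast
    then have "\<not> M \<subseteq> S" using NMS set_add_absorb2[OF minimal_over_right_ideal[OF M] rS] by auto
    then have K: "minimal_over R S (M <+> S)" using minimal_over_set_add_cases[OF M rS IS] by blast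
    have "N <+> S = S \<or> N <+> S = M <+> S"
      using between_minimal_set_add[OF M rS IS right_ideal_set_add[OF rN rS]]
        set_add_upper2[OF rN rS]
          set_add_least[OF right_ideal_set_add[OF minimal_over_right_ideal[OF M] rS]
          NMS set_add_upper2[OF minimal_over_right_ideal[OF M] rS]] by blast
    then have "N <+> S = M <+> S" using \<open>\<not> N \<subseteq> S\<close> set_add_upper1[OF rN rS] by auto
    then show ?thesis using minimal_over_diamond[OF K rN IN I IS True] by blast
  qed
qed simp

lemma minimal_over_below_soc_succ:
  assumes I: "right_ideal R I" and N: "right_ideal R N" "I \<subseteq> N" "N \<subseteq> soc_succ R I" "N \<noteq> I"
  shows "\<exists>M. minimal_over R I M \<and> M \<subseteq> N"
proof -
  obtain x where x: "x \<in> N" "x \<notin> I" using N by blast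
  then have "x \<in> simple_sums I" using N soc_succ_subset_simple_sums[OF I] by blast
  then obtain Ms where Ms: "\<forall>M\<in>set Ms. minimal_over R I M" "x \<in> set_add_list Ms I"
    unfolding simple_sums_def by blast
  have "right_ideal R (set_add_list Ms I)" "I \<subseteq> set_add_list Ms I"
    using right_ideal_sum_simples[OF I Ms(1)] by auto
  then have "\<exists>M. minimal_over R I M \<and> M \<subseteq> N \<inter> set_add_list Ms I"
    using minimal_over_below_set_add_list[OF I Ms(1) right_ideal_Int[OF N(1)]] N x Ms by auto
  then show ?thesis by blast
qed

end

lemma socle_term_zero_subset: "socle_term R T \<Longrightarrow> {\<zero>\<^bsub>R\<^esub>} \<subseteq> T"
proof (induction rule: socle_term.induct)
  case (succ I)
  then show ?case using soc_succ_ge[of I R] by blast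
qed blast+

text \<open>
  As there are no ordinals at hand, the chain
  property is proved by two nested inductions over \<^const>\<open>socle_term\<close>, the inner one relative to
  a term \<open>m\<close> whose successor dominates every smaller term.\<close>

lemma socle_term_subset_or_succ_subset:
  assumes m: "socle_term R m" and below: "\<forall>n. socle_term R n \<longrightarrow> n \<subset> m \<longrightarrow> soc_succ R n \<subseteq> m"
  shows "socle_term R n \<Longrightarrow> n \<subseteq> m \<or> soc_succ R m \<subseteq> n"
proof (induction rule: socle_term.induct)
  case zero
  then show ?case using socle_term_zero_subset[OF m] by blast
next
  case (succ n')
  from succ.IH show ?case
  proof
    assume "n' \<subseteq> m"
    then consider "n' \<subset> m" | "n' = m" by blast
    then show ?thesis
    proof cases
      case 1
      then show ?thesis using below succ.hyps by blast
    qed simp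
  next
    assume "soc_succ R m \<subseteq> n'"
    then show ?thesis using soc_succ_ge[of n' R] by blast
  qed
next
  case (union C)
  then show ?case by blast
qed

lemma socle_term_succ_subset:
  "socle_term R m \<Longrightarrow> \<forall>n. socle_term R n \<longrightarrow> n \<subset> m \<longrightarrow> soc_succ R n \<subseteq> m"
proof (induction rule: socle_term.induct)
  case zero
  then show ?case using socle_term_zero_subset by blast
next
  case (succ m')
  show ?case
  proof (intro allI impI)
    fix n assume n: "socle_term R n" "n \<subset> soc_succ R m'"
    then have "n \<subseteq> m'"
      using socle_term_subset_or_succ_subset[OF succ.hyps succ.IH n(1)] by blast
    then show "soc_succ R n \<subseteq> soc_succ R m'" using succ.IH n(1) soc_succ_ge[of m' R] by blast
  qed
next
  case (union C)
  show ?case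
  proof (intro allI impI)
    fix n assume n: "socle_term R n" "n \<subset> \<Union>C"
    have cases: "n \<subseteq> c \<or> soc_succ R c \<subseteq> n" if "c \<in> C" for c
      using socle_term_subset_or_succ_subset[OF _ _ n(1)] union.IH that by blast
    have "\<not> (\<forall>c\<in>C. soc_succ R c \<subseteq> n)"
      using n(2) soc_succ_ge[of _ R] by blast
    then obtain c where c: "c \<in> C" "n \<subseteq> c" using cases by blast
    show "soc_succ R n \<subseteq> \<Union>C"
    proof (cases "n = c")
      case True
      obtain d where d: "d \<in> C" "\<not> d \<subseteq> c" using n(2) True by blast
      then have "soc_succ R c \<subseteq> d"
        using socle_term_subset_or_succ_subset[of R c d] union.IH c(1) by blast
      then show ?thesis using d(1) True by blast
    next
      case False
      then show ?thesis using c union.IH n(1) by blast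
    qed
  qed
qed

lemma socle_term_chain: "socle_term R m \<Longrightarrow> socle_term R n \<Longrightarrow> n \<subseteq> m \<or> m \<subseteq> n"
  using socle_term_subset_or_succ_subset[OF _ socle_term_succ_subset] soc_succ_ge[of m R] by blast

context ring
begin

lemma ideal_Union_chain:
  assumes "C \<noteq> {}" and ideals: "\<And>J. J \<in> C \<Longrightarrow> ideal J R"
    and chain: "\<And>J K. J \<in> C \<Longrightarrow> K \<in> C \<Longrightarrow> J \<subseteq> K \<or> K \<subseteq> J"
  shows "ideal (\<Union>C) R"
proof (rule ideal_of_right_ideal)
  have ri: "\<And>J. J \<in> C \<Longrightarrow> right_ideal R J" using ideals ideal_right_ideal by blast
  show "right_ideal R (\<Union>C)"
    unfolding right_ideal_iff
  proof (intro conjI ballI)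
    show "\<Union>C \<subseteq> carrier R" "\<zero> \<in> \<Union>C" using assms(1) ri right_idealD(1,2) by blast+
    fix x assume "x \<in> \<Union>C"
    then obtain J where J: "J \<in> C" "x \<in> J" by blast
    show "\<ominus> x \<in> \<Union>C" using J ri right_idealD(4) by blast
    show "x \<otimes> r \<in> \<Union>C" if "r \<in> carrier R" for r using J ri right_idealD(5) that by blast
    show "x \<oplus> y \<in> \<Union>C" if y: "y \<in> \<Union>C" for y
    proof -
      obtain K where K: "K \<in> C" "y \<in> K" using y by blast
      then show ?thesis using chain[OF J(1) K(1)] J ri right_idealD(3) by blast
    qed
  qed
  show "a \<otimes> x \<in> \<Union>C" if "x \<in> \<Union>C" "a \<in> carrier R" for x a
    using that ideals ideal.I_l_closed[of _ R] by blast
qed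

lemma socle_term_ideal: "socle_term R T \<Longrightarrow> ideal T R"
proof (induction rule: socle_term.induct)
  case zero
  then show ?case using zeroideal by simp
next
  case (succ I)
  then show ?case using ideal_soc_succ by blast
next
  case (union C)
  then show ?case using ideal_Union_chain[of C] socle_term_chain[of R] by blast
qed

lemma socle_term_essential_succ:
  assumes I: "ideal I R" and T: "ideal T R" and IT: "I \<subseteq> T"
    and J: "right_ideal R J" "I \<subseteq> J" "J \<inter> T = I" "\<not> J \<inter> soc_succ R T \<subseteq> I"
  shows "\<exists>M. minimal_over R I M \<and> M \<subseteq> J"
proof -
  have rI: "right_ideal R I" and rT: "right_ideal R T" using I T ideal_right_ideal by auto
  have rST: "right_ideal R (soc_succ R T)" by (rule right_ideal_soc_succ[OF rT])
  define J' where "J' = J \<inter> soc_succ R T"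
  have rJ': "right_ideal R J'" unfolding J'_def by (rule right_ideal_Int[OF J(1) rST])
  define N where "N = T <+> J'"
  have "T \<subseteq> N" "N \<subseteq> soc_succ R T"
    unfolding N_def using set_add_upper1[OF rT rJ'] set_add_least[OF rST] soc_succ_ge[of T R] J'_def
    by auto
  moreover have "N \<noteq> T"
    using J set_add_upper2[OF rT rJ'] unfolding N_def J'_def by blast
  ultimately obtain M where M: "minimal_over R T M" "M \<subseteq> N"
    using minimal_over_below_soc_succ[OF rT right_ideal_set_add[OF rT rJ']] unfolding N_def by blast
  note rM = minimal_over_right_ideal[OF M(1)] and TM = minimal_over_subset[OF M(1)]
  define L where "L = M \<inter> J"
  have rL: "right_ideal R L" unfolding L_def by (rule right_ideal_Int[OF rM J(1)])
  have "M = M \<inter> (T <+> J')" using M(2) unfolding N_def by blast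
  also have "\<dots> = T <+> (M \<inter> J')" by (rule right_ideal_modular[OF rT rJ' rM TM])
  finally have "T <+> L = M"
    using set_add_mono[of T T "M \<inter> J'" L] set_add_least[OF rM TM, of L]
    unfolding L_def J'_def by blast
  then have "L <+> T = M" using set_add_comm right_idealD(1) rL rT by metis
  moreover have "L \<inter> T = I" "I \<subseteq> L" unfolding L_def using J IT TM by auto
  ultimately have "minimal_over R I L" using minimal_over_diamond[OF M(1) rL _ rI IT] by blast
  then show ?thesis unfolding L_def by blast
qed

lemma socle_term_essential_Int:
  assumes sI: "socle_term R I"
  shows "socle_term R T \<Longrightarrow> \<forall>J. right_ideal R J \<and> I \<subseteq> J \<and> \<not> J \<inter> T \<subseteq> I \<longrightarrow>
           (\<exists>M. minimal_over R I M \<and> M \<subseteq> J)"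
proof (induction rule: socle_term.induct)
  case zero
  then show ?case using socle_term_zero_subset[OF sI] by blast
next
  case (union C)
  then show ?case by blast
next
  case (succ T)
  have iI: "ideal I R" and iT: "ideal T R" using socle_term_ideal sI succ.hyps by auto
  show ?case
  proof (intro allI impI)
    fix J assume J: "right_ideal R J \<and> I \<subseteq> J \<and> \<not> J \<inter> soc_succ R T \<subseteq> I"
    show "\<exists>M. minimal_over R I M \<and> M \<subseteq> J"
    proof (cases "J \<inter> T \<subseteq> I")
      case JT: True
      from socle_term_chain[OF sI succ.hyps] show ?thesis
      proof
        assume TI: "T \<subseteq> I"
        have rI: "right_ideal R I" using ideal_right_ideal[OF iI] .
        define N where "N = J \<inter> soc_succ R I"
        have "soc_succ R T \<subseteq> soc_succ R I"
          by (rule soc_succ_mono[OF ideal_right_ideal[OF iT] rI TI])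
        then have "right_ideal R N" "I \<subseteq> N" "N \<subseteq> soc_succ R I" "N \<noteq> I"
          unfolding N_def using right_ideal_Int[OF _ right_ideal_soc_succ[OF rI]] J
            soc_succ_ge[of I R]
          by auto
        then show ?thesis using minimal_over_below_soc_succ[OF rI] unfolding N_def by blast
      next
        assume "I \<subseteq> T"
        then show ?thesis using socle_term_essential_succ[OF iI iT] J JT by blast
      qed
    qed (use succ.IH J in blast)
  qed
qed

lemma socle_term_essential:
  assumes sa: "semiartinian R" and sI: "socle_term R I"
    and J: "right_ideal R J" "I \<subseteq> J" "\<not> J \<subseteq> I"
  shows "\<exists>M. minimal_over R I M \<and> M \<subseteq> J"
proof -
  have "J \<inter> carrier R = J" using right_idealD(1)[OF J(1)] by blast
  then show ?thesis
    using socle_term_essential_Int[OF sI] sa J unfolding semiartinian_def by metis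
qed

end

section \<open>Regular rings\<close>

context ring
begin

lemma regular_idempotent:
  assumes vn: "von_neumann_regular R" and x: "x \<in> carrier R"
  obtains z where "z \<in> carrier R" "x \<otimes> z \<otimes> x = x" "(x \<otimes> z) \<otimes> (x \<otimes> z) = x \<otimes> z"
    "(z \<otimes> x) \<otimes> (z \<otimes> x) = z \<otimes> x"
proof -
  obtain z where z: "z \<in> carrier R" "x \<otimes> z \<otimes> x = x" using vn x unfolding von_neumann_regular_def
    by blast
  then show ?thesis using that x by (metis m_assoc m_closed)
qed

lemma minimal_over_idempotent:
  assumes vn: "von_neumann_regular R" and i: "ideal I R" and M: "minimal_over R I M"
  obtains e where "e \<in> M" "e \<notin> I" "e \<otimes> e = e" "\<And>m. m \<in> M \<Longrightarrow> cong_mod I (e \<otimes> m) m"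
proof -
  obtain x where x: "x \<in> M" "x \<notin> I" using minimal_over_subset[OF M] minimal_over_neq[OF M] by blast
  have xc: "x \<in> carrier R" using minimal_over_mem_carrier[OF M x(1)] .
  obtain z where z: "z \<in> carrier R" "x \<otimes> z \<otimes> x = x" "(x \<otimes> z) \<otimes> (x \<otimes> z) = x \<otimes> z"
    using regular_idempotent[OF vn xc] by blast
  define e where "e = x \<otimes> z"
  have ec: "e \<in> carrier R" and ex: "e \<otimes> x = x" unfolding e_def using xc z by simp_all
  have "e \<in> M" unfolding e_def using right_idealD(5)[OF minimal_over_right_ideal[OF M] x(1) z(1)] .
  moreover have "e \<notin> I" using ideal.I_r_closed[OF i _ xc] ex x(2) by metis
  moreover have "cong_mod I (e \<otimes> m) m" if m: "m \<in> M" for m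
  proof -
    obtain p r where pr: "p \<in> I" "r \<in> carrier R" "m = p \<oplus> x \<otimes> r"
      using m minimal_over_generated[OF M x] by (auto simp: set_add_iff)
    have pc: "p \<in> carrier R" using pr(1) ideal.Icarr[OF i] by blast
    have "e \<otimes> m = e \<otimes> p \<oplus> x \<otimes> r"
      using pr pc ec xc ex by (simp add: r_distr m_assoc[symmetric])
    moreover have "cong_mod I (e \<otimes> p \<oplus> x \<otimes> r) (x \<otimes> r)"
      using cong_mod_add_ideal[OF i _ ideal.I_l_closed[OF i pr(1) ec], of "x \<otimes> r"] xc pr pc ec
      by (simp add: a_comm)
    moreover have "cong_mod I (p \<oplus> x \<otimes> r) (x \<otimes> r)"
      using cong_mod_add_ideal[OF i _ pr(1), of "x \<otimes> r"] xc pr pc by (simp add: a_comm)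
    ultimately show ?thesis using pr(3) cong_mod_trans[OF i] cong_mod_sym[OF i] by metis
  qed
  ultimately show ?thesis using that z unfolding e_def by simp
qed

text \<open>If \<open>d\<close> annihilates every simple subquotient,
  so does the idempotent \<open>f = z d\<close> with \<open>d z d = d\<close>; then \<open>I + f R\<close> contains no simple
  subquotient, so by essentiality of the socle \<open>f \<in> I\<close>, whence \<open>d = d f \<in> I\<close>.\<close>

lemma socle_faithful:
  assumes vn: "von_neumann_regular R" and sa: "semiartinian R" and sI: "socle_term R I"
    and d: "d \<in> carrier R" and kill: "\<And>M m. minimal_over R I M \<Longrightarrow> m \<in> M \<Longrightarrow> d \<otimes> m \<in> I"
  shows "d \<in> I"
proof -
  have i: "ideal I R" using socle_term_ideal[OF sI] .
  have rI: "right_ideal R I" using ideal_right_ideal[OF i] .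
  obtain z where z: "z \<in> carrier R" "d \<otimes> z \<otimes> d = d" "(z \<otimes> d) \<otimes> (z \<otimes> d) = z \<otimes> d"
    using regular_idempotent[OF vn d] by blast
  define f where "f = z \<otimes> d"
  have fc: "f \<in> carrier R" unfolding f_def using z d by simp
  have "f \<in> I"
  proof (rule ccontr)
    assume nf: "f \<notin> I"
    note J = principal_right_ideal_over[OF rI fc]
    obtain M where M: "minimal_over R I M" "M \<subseteq> I <+> (\<otimes>) f ` carrier R"
      using socle_term_essential[OF sa sI J(1,2)] J(3) nf by blast
    have "M \<subseteq> I"
    proof
      fix m assume m: "m \<in> M"
      then have "m \<in> I <+> (\<otimes>) f ` carrier R" using M(2) by blast
      then obtain p r where pr: "p \<in> I" "r \<in> carrier R" "m = p \<oplus> f \<otimes> r"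
        by (auto simp: set_add_iff)
      have pc: "p \<in> carrier R" using ideal.Icarr[OF i pr(1)] .
      have "f \<otimes> m = f \<otimes> p \<oplus> f \<otimes> r"
        using pr pc fc z(3) unfolding f_def by (simp add: r_distr m_assoc[symmetric])
      moreover have "f \<otimes> m \<in> I"
        using ideal.I_l_closed[OF i kill[OF M(1) m] z(1)] minimal_over_mem_carrier[OF M(1) m] z d
        unfolding f_def by (simp add: m_assoc)
      ultimately have "f \<otimes> r \<in> I"
        using right_ideal_add_cancel[OF rI, of "f \<otimes> r" "f \<otimes> p"] ideal.I_l_closed[OF i pr(1) fc]
          fc pr pc by (simp add: a_comm)
      then show "m \<in> I" using pr right_idealD(3)[OF rI] by simp
    qed
    then show False using minimal_over_subset[OF M(1)] minimal_over_neq[OF M(1)] by blast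
  qed
  then have "d \<otimes> f \<in> I" using ideal.I_l_closed[OF i _ d] by blast
  moreover have "d \<otimes> f = d" unfolding f_def using z d by (simp add: m_assoc[symmetric])
  ultimately show ?thesis by simp
qed

end

section \<open>Module maps and endomorphism rings\<close>

context ring
begin

lemma mod_iso_refl:
  assumes i: "ideal I R" and rM: "right_ideal R M" and IM: "I \<subseteq> M"
  shows "mod_iso R I M I M"
proof -
  have c: "\<And>x. x \<in> M \<Longrightarrow> x \<in> carrier R" using right_ideal_mem_carrier[OF rM] .
  have z: "\<zero> \<in> I" using right_idealD(2)[OF ideal_right_ideal[OF i]] .
  have "mod_hom R I M I M id"
    unfolding mod_hom_def using IM z c right_idealD(3,5)[OF rM] by (auto simp: r_neg minus_eq)
  then show ?thesis unfolding mod_iso_def using z c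
    by (intro exI[of _ id]) (auto simp: r_neg minus_eq)
qed

lemma mod_hom_cong:
  assumes i: "ideal I R" and rM: "right_ideal R M" and IM: "I \<subseteq> M" and rM': "right_ideal R M'"
    and f: "mod_hom R I M I M' f" and a: "a \<in> M" and b: "b \<in> M" and ab: "cong_mod I a b"
  shows "cong_mod I (f a) (f b)"
proof -
  have ac: "a \<in> carrier R" "b \<in> carrier R" using a b right_ideal_mem_carrier[OF rM] by auto
  have dI: "a \<ominus> b \<in> I" using ab by (simp add: cong_mod_def)
  then have dM: "a \<ominus> b \<in> M" using IM by blast
  have fI: "f (a \<ominus> b) \<in> I" using f dI unfolding mod_hom_def by blast
  have fc: "\<And>x. x \<in> M \<Longrightarrow> f x \<in> carrier R"
    using f right_ideal_mem_carrier[OF rM'] unfolding mod_hom_def by blast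
  have "b \<oplus> (a \<ominus> b) = a" using ac by (simp add: minus_eq a_lcomm r_neg)
  moreover have "cong_mod I (f (b \<oplus> (a \<ominus> b))) (f b \<oplus> f (a \<ominus> b))"
    using f fc b dM right_idealD(3)[OF rM b dM] unfolding mod_hom_def cong_mod_def by blast
  moreover have "cong_mod I (f b \<oplus> f (a \<ominus> b)) (f b)"
    using cong_mod_add_ideal[OF i fc[OF b] fI] .
  ultimately show ?thesis using cong_mod_trans[OF i] by metis
qed

lemma mod_hom_left_mult:
  assumes i: "ideal I R" and M: "minimal_over R I M" and rM': "right_ideal R M'"
    and f: "mod_hom R I M I M' f"
    and e: "e \<in> M" "\<And>m. m \<in> M \<Longrightarrow> cong_mod I (e \<otimes> m) m" and x: "x \<in> M"
  shows "cong_mod I (f x) (f e \<otimes> x)"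
proof -
  note rM = minimal_over_right_ideal[OF M] and IM = minimal_over_subset[OF M]
  have xc: "x \<in> carrier R" using minimal_over_mem_carrier[OF M x] .
  have ex: "e \<otimes> x \<in> M" using right_idealD(5)[OF rM e(1) xc] .
  have fc: "\<And>x. x \<in> M \<Longrightarrow> f x \<in> carrier R"
    using f right_ideal_mem_carrier[OF rM'] unfolding mod_hom_def by blast
  have "cong_mod I (f x) (f (e \<otimes> x))"
    using mod_hom_cong[OF i rM IM rM' f x ex] e(2)[OF x] cong_mod_sym[OF i] by blast
  moreover have "cong_mod I (f (e \<otimes> x)) (f e \<otimes> x)"
    using f e(1) xc fc[OF e(1)] fc[OF ex] unfolding mod_hom_def cong_mod_def by blast
  ultimately show ?thesis using cong_mod_trans[OF i] by blast
qed

definition lmult_end :: "'a set \<Rightarrow> 'a \<Rightarrow> 'a set \<Rightarrow> 'a set \<Rightarrow> 'a set" where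
  "lmult_end I a M = (\<lambda>c\<in>qcarrier R I M. I +> (a \<otimes> (SOME x. x \<in> c)))"

lemma qcarrier_memI: "x \<in> M \<Longrightarrow> I +> x \<in> qcarrier R I M"
  unfolding qcarrier_def by blast

lemma qcarrier_memE: "c \<in> qcarrier R I M \<Longrightarrow> (\<And>x. x \<in> M \<Longrightarrow> c = I +> x \<Longrightarrow> P) \<Longrightarrow> P"
  unfolding qcarrier_def by blast

lemma End_ring_simps:
  "\<zero>\<^bsub>End_ring R I M\<^esub> = (\<lambda>c\<in>qcarrier R I M. I)"
  "\<one>\<^bsub>End_ring R I M\<^esub> = (\<lambda>c\<in>qcarrier R I M. c)"
  "\<phi> \<otimes>\<^bsub>End_ring R I M\<^esub> \<psi> = (\<lambda>c\<in>qcarrier R I M. \<phi> (\<psi> c))"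
  "\<phi> \<oplus>\<^bsub>End_ring R I M\<^esub> \<psi> = (\<lambda>c\<in>qcarrier R I M. \<phi> c <+> \<psi> c)"
  unfolding End_ring_def by simp_all

lemma End_ring_carrierD:
  "\<phi> \<in> carrier (End_ring R I M) \<Longrightarrow>
    \<phi> \<in> extensional (qcarrier R I M) \<and> (\<exists>f. mod_hom R I M I M f \<and> (\<forall>x\<in>M. \<phi> (I +> x) = I +> f x))"
  unfolding End_ring_def by simp

lemma End_ring_eqI:
  assumes "\<phi> \<in> extensional (qcarrier R I M)" "\<psi> \<in> extensional (qcarrier R I M)"
    and "\<And>x. x \<in> M \<Longrightarrow> \<phi> (I +> x) = \<psi> (I +> x)"
  shows "\<phi> = \<psi>"
proof (rule extensionalityI[OF assms(1,2)])
  fix c assume "c \<in> qcarrier R I M"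
  then show "\<phi> c = \<psi> c" by (rule qcarrier_memE) (simp add: assms(3))
qed

lemma lmult_end_extensional: "lmult_end I a M \<in> extensional (qcarrier R I M)"
  unfolding lmult_end_def by simp

lemma lmult_end_apply:
  assumes i: "ideal I R" and a: "a \<in> carrier R" and x: "x \<in> M" "x \<in> carrier R"
  shows "lmult_end I a M (I +> x) = I +> (a \<otimes> x)"
proof -
  interpret I: ideal I R by (rule i)
  have s: "(SOME y. y \<in> I +> x) \<in> I +> x" using I.a_rcos_self[OF x(2)] by (rule someI)
  have sc: "(SOME y. y \<in> I +> x) \<in> carrier R" using I.a_elemrcos_carrier[OF x(2) s] .
  have "cong_mod I (SOME y. y \<in> I +> x) x"
    using I.a_rcos_module_minus[OF ring_axioms x(2) sc] s sc x(2) by (simp add: cong_mod_def)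
  then have "cong_mod I (a \<otimes> (SOME y. y \<in> I +> x)) (a \<otimes> x)" by (rule cong_mod_mult_left[OF i a])
  then have "I +> (a \<otimes> (SOME y. y \<in> I +> x)) = I +> (a \<otimes> x)"
    using a_rcos_eq_iff_cong_mod[OF i] a sc x(2) by simp
  then show ?thesis unfolding lmult_end_def using qcarrier_memI[OF x(1)] by simp
qed

context
  fixes I M
  assumes i: "ideal I R" and M: "minimal_over R I M"
begin

private lemma M_carrier: "x \<in> M \<Longrightarrow> x \<in> carrier R"
  using minimal_over_mem_carrier[OF M] .

lemma lmult_end_carrier:
  assumes a: "a \<in> carrier R" and aM: "\<And>m. m \<in> M \<Longrightarrow> a \<otimes> m \<in> M"
  shows "lmult_end I a M \<in> carrier (End_ring R I M)"
proof -
  have z: "\<zero> \<in> I" using right_idealD(2)[OF ideal_right_ideal[OF i]] .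
  have "mod_hom R I M I M ((\<otimes>) a)"
    unfolding mod_hom_def
  proof (intro conjI ballI)
    show "a \<otimes> x \<in> M" if "x \<in> M" for x using aM[OF that] .
    show "a \<otimes> x \<in> I" if "x \<in> I" for x using ideal.I_l_closed[OF i that a] .
    show "a \<otimes> (x \<oplus> y) \<ominus> (a \<otimes> x \<oplus> a \<otimes> y) \<in> I" if "x \<in> M" "y \<in> M" for x y
      using z a M_carrier that by (simp add: r_distr minus_eq r_neg)
    show "a \<otimes> (x \<otimes> r) \<ominus> a \<otimes> x \<otimes> r \<in> I" if "x \<in> M" "r \<in> carrier R" for x r
      using z a M_carrier that by (simp add: m_assoc minus_eq r_neg)
  qed
  moreover have "\<forall>x\<in>M. lmult_end I a M (I +> x) = I +> a \<otimes> x"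
    using lmult_end_apply[OF i a] M_carrier by blast
  ultimately show ?thesis unfolding End_ring_def using lmult_end_extensional[of I a M] by auto
qed

lemma lmult_end_eq_iff:
  assumes a: "a \<in> carrier R" and b: "b \<in> carrier R"
  shows "lmult_end I a M = lmult_end I b M \<longleftrightarrow> (\<forall>x\<in>M. cong_mod I (a \<otimes> x) (b \<otimes> x))"
    (is "?eq \<longleftrightarrow> _")
proof -
  have "lmult_end I a M (I +> x) = lmult_end I b M (I +> x) \<longleftrightarrow> cong_mod I (a \<otimes> x) (b \<otimes> x)"
    if x: "x \<in> M" for x
    using lmult_end_apply[OF i a x M_carrier[OF x]] lmult_end_apply[OF i b x M_carrier[OF x]]
      a_rcos_eq_iff_cong_mod[OF i] a b M_carrier[OF x] by simp
  then show ?thesis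
    using End_ring_eqI[where \<phi>="lmult_end I a M" and \<psi>="lmult_end I b M" and I=I and M=M]
      lmult_end_extensional by metis
qed

lemma lmult_end_zero_iff:
  assumes a: "a \<in> carrier R"
  shows "lmult_end I a M = \<zero>\<^bsub>End_ring R I M\<^esub> \<longleftrightarrow> (\<forall>x\<in>M. a \<otimes> x \<in> I)"
proof -
  interpret I: ideal I R by (rule i)
  have "lmult_end I \<zero> M = \<zero>\<^bsub>End_ring R I M\<^esub>"
    unfolding End_ring_simps
    by (rule End_ring_eqI[OF lmult_end_extensional restrict_extensional])
      (use lmult_end_apply[OF i zero_closed] M_carrier qcarrier_memI
        a_rcos_zero[OF i right_idealD(2)[OF ideal_right_ideal[OF i]]] in auto)
  then have "lmult_end I a M = \<zero>\<^bsub>End_ring R I M\<^esub> \<longleftrightarrow> (\<forall>x\<in>M. cong_mod I (a \<otimes> x) (\<zero> \<otimes> x))"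
    using lmult_end_eq_iff[OF a zero_closed] by simp
  also have "\<dots> \<longleftrightarrow> (\<forall>x\<in>M. a \<otimes> x \<in> I)" using M_carrier a cong_mod_zero_iff by simp
  finally show ?thesis .
qed

lemma lmult_end_zero: "lmult_end I \<zero> M = \<zero>\<^bsub>End_ring R I M\<^esub>"
  using lmult_end_zero_iff[OF zero_closed] right_idealD(2)[OF ideal_right_ideal[OF i]] M_carrier
  by simp

lemma lmult_end_one: "lmult_end I \<one> M = \<one>\<^bsub>End_ring R I M\<^esub>"
  unfolding End_ring_simps
  by (rule End_ring_eqI[OF lmult_end_extensional restrict_extensional])
    (use lmult_end_apply[OF i one_closed] qcarrier_memI M_carrier in auto)

lemma lmult_end_add:
  assumes a: "a \<in> carrier R" and b: "b \<in> carrier R"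
  shows "lmult_end I (a \<oplus> b) M = lmult_end I a M \<oplus>\<^bsub>End_ring R I M\<^esub> lmult_end I b M"
  unfolding End_ring_simps
proof (rule End_ring_eqI[OF lmult_end_extensional restrict_extensional])
  interpret I: ideal I R by (rule i)
  fix x assume x: "x \<in> M"
  show "lmult_end I (a \<oplus> b) M (I +> x) =
      (\<lambda>c\<in>qcarrier R I M. lmult_end I a M c <+> lmult_end I b M c) (I +> x)"
    using lmult_end_apply[OF i _ x M_carrier[OF x]] qcarrier_memI[OF x] a b M_carrier[OF x]
      I.a_rcos_sum[of "a \<otimes> x" "b \<otimes> x"] by (simp add: l_distr)
qed

lemma lmult_end_mult:
  assumes a: "a \<in> carrier R" and b: "b \<in> carrier R" and bM: "\<And>m. m \<in> M \<Longrightarrow> b \<otimes> m \<in> M"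
  shows "lmult_end I (a \<otimes> b) M = lmult_end I a M \<otimes>\<^bsub>End_ring R I M\<^esub> lmult_end I b M"
  unfolding End_ring_simps
proof (rule End_ring_eqI[OF lmult_end_extensional restrict_extensional])
  fix x assume x: "x \<in> M"
  show "lmult_end I (a \<otimes> b) M (I +> x) =
      (\<lambda>c\<in>qcarrier R I M. lmult_end I a M (lmult_end I b M c)) (I +> x)"
    using lmult_end_apply[OF i _ x M_carrier[OF x]]
      lmult_end_apply[OF i a bM[OF x] M_carrier[OF bM[OF x]]]
      qcarrier_memI[OF x] a b M_carrier[OF x] by (simp add: m_assoc)
qed

end

end

section \<open>Homogeneous components and endomorphisms of simple subquotients\<close>

context ring
begin

lemma minimal_over_subset_hom_comp: "ideal I R \<Longrightarrow> minimal_over R I M \<Longrightarrow> M \<subseteq> hom_comp R I M"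
  unfolding hom_comp_def
  using mod_iso_refl minimal_over_right_ideal[of R I M] minimal_over_subset[of R I M] by blast

lemma right_ideal_hom_comp: "minimal_over R I M \<Longrightarrow> right_ideal R (hom_comp R I M)"
  unfolding hom_comp_def
  by (rule right_ideal_Inter)
    (use right_ideal_carrier right_idealD(1) minimal_over_right_ideal[of R I]
      minimal_over_right_ideal_base[of R I M] in blast)+

lemma hom_comp_ge: "I \<subseteq> hom_comp R I M"
  unfolding hom_comp_def by blast

lemma hom_comp_subset_soc_succ: "minimal_over R I M \<Longrightarrow> hom_comp R I M \<subseteq> soc_succ R I"
  unfolding hom_comp_def
  using right_ideal_soc_succ[OF minimal_over_right_ideal_base[of R I M]] soc_succ_ge[of I R]
    minimal_over_subset_soc_succ[of R I] by blast

lemma comp_simple_self: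
  assumes M: "minimal_over R I M"
  shows "comp_simple R I M = M"
proof -
  have "minimal_over R I (comp_simple R I M) \<and> comp_simple R I M \<subseteq> M"
    unfolding comp_simple_def by (rule someI[of _ M]) (use M in simp)
  then show ?thesis
    using minimal_over_between[OF M minimal_over_right_ideal minimal_over_subset] minimal_over_neq
    by metis
qed

lemma comp_mult_self:
  assumes M: "minimal_over R I M"
  shows "comp_mult R I M = 1"
  unfolding comp_mult_def
proof (rule Least_equality)
  show "\<exists>Ms. length Ms = 1 \<and> (\<forall>M\<in>set Ms. minimal_over R I M) \<and> M = set_add_list Ms I"
    using M set_add_absorb1[OF minimal_overD(1,2,3)[OF M]] by (intro exI[of _ "[M]"]) auto
  fix n assume "\<exists>Ms. length Ms = n \<and> (\<forall>M\<in>set Ms. minimal_over R I M) \<and> M = set_add_list Ms I"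
  then show "1 \<le> n" using minimal_over_neq[OF M] by (cases n) auto
qed

lemma End_ring_eq_lmult_end:
  assumes vn: "von_neumann_regular R" and i: "ideal I R" and M: "minimal_over R I M"
    and \<phi>: "\<phi> \<in> carrier (End_ring R I M)"
  obtains c where "c \<in> carrier R" "\<phi> = lmult_end I c M"
proof -
  obtain f where f: "mod_hom R I M I M f" "\<forall>x\<in>M. \<phi> (I +> x) = I +> f x"
    and ext: "\<phi> \<in> extensional (qcarrier R I M)" using End_ring_carrierD[OF \<phi>] by blast
  obtain e where e: "e \<in> M" "\<And>m. m \<in> M \<Longrightarrow> cong_mod I (e \<otimes> m) m"
    using minimal_over_idempotent[OF vn i M] by metis
  have fc: "f x \<in> carrier R" if "x \<in> M" for x
    using f(1) that minimal_over_mem_carrier[OF M] unfolding mod_hom_def by blast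
  have "lmult_end I (f e) M = \<phi>"
  proof (rule End_ring_eqI[OF lmult_end_extensional ext])
    fix x assume x: "x \<in> M"
    have "cong_mod I (f e \<otimes> x) (f x)"
      using cong_mod_sym[OF i mod_hom_left_mult[OF i M minimal_over_right_ideal[OF M] f(1) e x]] .
    then show "lmult_end I (f e) M (I +> x) = \<phi> (I +> x)"
      using lmult_end_apply[OF i fc[OF e(1)] x] a_rcos_eq_iff_cong_mod[OF i] f(2) x fc
        minimal_over_mem_carrier[OF M x] e(1) by simp
  qed
  then show ?thesis using that fc[OF e(1)] by blast
qed

context
  fixes I
  assumes i: "ideal I R" and comm: "\<forall>a\<in>carrier R. \<forall>b\<in>carrier R. cong_mod I (a \<otimes> b) (b \<otimes> a)"
begin

lemma comm_quotient_left_mult_closed: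
  assumes M: "right_ideal R M" "I \<subseteq> M" and a: "a \<in> carrier R" and m: "m \<in> M"
  shows "a \<otimes> m \<in> M"
proof -
  have "cong_mod I (a \<otimes> m) (m \<otimes> a)" using comm a right_ideal_mem_carrier[OF M(1) m] by blast
  then show ?thesis
    using right_ideal_minus_cancel[OF M(1)] right_idealD(5)[OF M(1) m a] M(2)
    unfolding cong_mod_def by blast
qed

text \<open>An isomorphism \<open>f : M/I \<rightarrow> M'/I\<close> is left multiplication by \<open>f e\<close>, and \<open>f e \<cdot> M \<subseteq> M\<close>
  since \<open>R/I\<close> is commutative.\<close>

lemma comm_mod_iso_eq:
  assumes vn: "von_neumann_regular R"
    and M: "minimal_over R I M" and M': "minimal_over R I M'" and iso: "mod_iso R I M I M'"
  shows "M' = M"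
proof -
  note rM = minimal_over_right_ideal[OF M] and rM' = minimal_over_right_ideal[OF M']
  obtain e where e: "e \<in> M" "\<And>m. m \<in> M \<Longrightarrow> cong_mod I (e \<otimes> m) m"
    using minimal_over_idempotent[OF vn i M] by metis
  obtain f g where fg: "mod_hom R I M I M' f" "mod_hom R I M' I M g" "\<forall>y\<in>M'. f (g y) \<ominus> y \<in> I"
    using iso unfolding mod_iso_def by blast
  have "y \<in> M" if y: "y \<in> M'" for y
  proof -
    have gy: "g y \<in> M" using fg(2) y unfolding mod_hom_def by blast
    have fe: "f e \<in> carrier R" and fgy: "f (g y) \<in> carrier R"
      using fg(1) e(1) gy right_ideal_mem_carrier[OF rM'] unfolding mod_hom_def by blast+
    have "cong_mod I y (f (g y))"
      using fg(3) y fgy right_ideal_mem_carrier[OF rM' y] cong_mod_sym[OF i]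
      unfolding cong_mod_def by blast
    moreover have "cong_mod I (f (g y)) (f e \<otimes> g y)"
      by (rule mod_hom_left_mult[OF i M rM' fg(1) e gy])
    moreover have "cong_mod I (f e \<otimes> g y) (g y \<otimes> f e)"
      using comm fe minimal_over_mem_carrier[OF M gy] by blast
    ultimately have "cong_mod I y (g y \<otimes> f e)" using cong_mod_trans[OF i] by blast
    then show ?thesis
      using right_ideal_minus_cancel[OF rM] right_idealD(5)[OF rM gy fe] minimal_over_subset[OF M]
      unfolding cong_mod_def by blast
  qed
  then show ?thesis
    using minimal_over_between[OF M rM' minimal_over_subset[OF M']] minimal_over_neq[OF M'] by blast
qed

lemma comm_hom_comp_eq:
  assumes vn: "von_neumann_regular R" and M: "minimal_over R I M"
  shows "hom_comp R I M = M"
proof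
  show "M \<subseteq> hom_comp R I M" by (rule minimal_over_subset_hom_comp[OF i M])
  show "hom_comp R I M \<subseteq> M"
    unfolding hom_comp_def using comm_mod_iso_eq[OF vn M] minimal_overD(1,3)[OF M] by blast
qed

lemma comm_hom_comps_eq:
  "von_neumann_regular R \<Longrightarrow> hom_comps R I = {M. minimal_over R I M}"
  unfolding hom_comps_def using comm_hom_comp_eq by auto

lemma comm_End_ring_commutative:
  assumes vn: "von_neumann_regular R" and M: "minimal_over R I M"
  shows "commutative_ring (End_ring R I M)"
  unfolding commutative_ring_def
proof (intro ballI)
  fix \<phi> \<psi> assume "\<phi> \<in> carrier (End_ring R I M)" "\<psi> \<in> carrier (End_ring R I M)"
  then obtain c d where c: "c \<in> carrier R" "\<phi> = lmult_end I c M"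
    and d: "d \<in> carrier R" "\<psi> = lmult_end I d M"
    using End_ring_eq_lmult_end[OF vn i M] by metis
  have stable: "\<And>a m. a \<in> carrier R \<Longrightarrow> m \<in> M \<Longrightarrow> a \<otimes> m \<in> M"
    using comm_quotient_left_mult_closed[OF minimal_overD(1,3)[OF M]] by blast
  have "lmult_end I (c \<otimes> d) M = lmult_end I (d \<otimes> c) M"
    using lmult_end_eq_iff[OF i M] cong_mod_mult_right[OF i] comm c d minimal_over_mem_carrier[OF M]
    by simp
  then show "\<phi> \<otimes>\<^bsub>End_ring R I M\<^esub> \<psi> = \<psi> \<otimes>\<^bsub>End_ring R I M\<^esub> \<phi>"
    using lmult_end_mult[OF i M] stable c d by metis
qed

end

end

section \<open>Homogeneous components of finite length\<close>

context ring
begin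

definition quot_ann :: "'a set \<Rightarrow> 'a set \<Rightarrow> 'a set" where
  "quot_ann I M = {r \<in> carrier R. \<forall>x\<in>M. x \<otimes> r \<in> I}"

lemma primitive_ideal_quot_ann: "minimal_over R I M \<Longrightarrow> primitive_ideal R (quot_ann I M)"
  unfolding primitive_ideal_def quot_ann_def by blast

lemma ideal_quot_ann:
  assumes i: "ideal I R" and rM: "right_ideal R M"
  shows "ideal (quot_ann I M) R"
proof (rule ideal_of_right_ideal)
  note rI = ideal_right_ideal[OF i] and mc = right_ideal_mem_carrier[OF rM]
  show "right_ideal R (quot_ann I M)"
    unfolding right_ideal_iff quot_ann_def
  proof (intro conjI ballI)
    show "\<zero> \<in> {r \<in> carrier R. \<forall>x\<in>M. x \<otimes> r \<in> I}" using right_idealD(2)[OF rI] mc by simp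
    fix r assume r: "r \<in> {r \<in> carrier R. \<forall>x\<in>M. x \<otimes> r \<in> I}"
    show "r \<oplus> s \<in> {r \<in> carrier R. \<forall>x\<in>M. x \<otimes> r \<in> I}"
      if "s \<in> {r \<in> carrier R. \<forall>x\<in>M. x \<otimes> r \<in> I}" for s
      using r that right_idealD(3)[OF rI] mc by (simp add: r_distr)
    show "\<ominus> r \<in> {r \<in> carrier R. \<forall>x\<in>M. x \<otimes> r \<in> I}"
      using r right_idealD(4)[OF rI] mc by (simp add: r_minus)
    show "r \<otimes> t \<in> {r \<in> carrier R. \<forall>x\<in>M. x \<otimes> r \<in> I}" if "t \<in> carrier R" for t
      using r that right_idealD(5)[OF rI] mc by (simp add: m_assoc[symmetric])
  qed auto
  show "a \<otimes> q \<in> quot_ann I M" if q: "q \<in> quot_ann I M" and a: "a \<in> carrier R" for q a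
    using q a right_idealD(5)[OF rM] mc unfolding quot_ann_def by (simp add: m_assoc[symmetric])
qed

lemma mod_iso_quot_ann_subset:
  assumes i: "ideal I R" and rM: "right_ideal R M" and rM': "right_ideal R M'"
    and iso: "mod_iso R I M I M'"
  shows "quot_ann I M \<subseteq> quot_ann I M'"
proof
  fix q assume q: "q \<in> quot_ann I M"
  then have qc: "q \<in> carrier R" unfolding quot_ann_def by blast
  obtain f g where fg: "mod_hom R I M I M' f" "mod_hom R I M' I M g" "\<forall>y\<in>M'. f (g y) \<ominus> y \<in> I"
    using iso unfolding mod_iso_def by blast
  have "y \<otimes> q \<in> I" if y: "y \<in> M'" for y
  proof -
    have gy: "g y \<in> M" using fg(2) y unfolding mod_hom_def by blast
    have fgc: "f (g y) \<in> carrier R" and yc: "y \<in> carrier R"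
      using fg(1) gy y right_ideal_mem_carrier[OF rM'] unfolding mod_hom_def by blast+
    have "f (g y \<otimes> q) \<in> I" using fg(1) q gy unfolding mod_hom_def quot_ann_def by blast
    moreover have "cong_mod I (f (g y \<otimes> q)) (f (g y) \<otimes> q)"
      using fg(1) gy qc fgc right_idealD(5)[OF rM gy qc] right_ideal_mem_carrier[OF rM']
      unfolding mod_hom_def cong_mod_def by blast
    ultimately have "f (g y) \<otimes> q \<in> I" using cong_mod_mem[OF i cong_mod_sym[OF i]] by blast
    moreover have "cong_mod I (y \<otimes> q) (f (g y) \<otimes> q)"
      using cong_mod_mult_right[OF i qc] fg(3) y yc fgc cong_mod_sym[OF i] unfolding cong_mod_def
      by blast
    ultimately show ?thesis using cong_mod_mem[OF i] by blast
  qed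
  then show "q \<in> quot_ann I M'" using qc unfolding quot_ann_def by blast
qed

text \<open>The homogeneous component \<open>H\<close> of \<open>M/I\<close> is annihilated by \<open>Q = ann(M/I)\<close>; in a regular ring
  this forces \<open>H \<inter> Q = I\<close>, so that \<open>J \<mapsto> J + Q\<close> embeds the interval \<open>[I, H]\<close> into the
  right ideals of the artinian ring \<open>R/Q\<close>.\<close>

lemma hom_comp_Int_quot_ann:
  assumes vn: "von_neumann_regular R" and i: "ideal I R" and M: "minimal_over R I M"
    and h: "h \<in> hom_comp R I M" "h \<in> quot_ann I M"
  shows "h \<in> I"
proof -
  define A where "A = {h \<in> carrier R. \<forall>q\<in>quot_ann I M. h \<otimes> q \<in> I}"
  have "right_ideal R A"
    unfolding A_def right_ideal_iff
    using ideal_right_ideal[OF ideal_quot_ann[OF i minimal_over_right_ideal[OF M]]]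
      right_idealD[OF ideal_right_ideal[OF i]]
        ideal.I_l_closed[OF ideal_quot_ann[OF i minimal_over_right_ideal[OF M]]]
    by (auto simp: l_distr l_minus m_assoc right_ideal_mem_carrier)
  moreover have "I \<subseteq> A"
    unfolding A_def using ideal.I_r_closed[OF i] ideal.Icarr[OF i] quot_ann_def by auto
  moreover have "M' \<subseteq> A" if "minimal_over R I M'" "mod_iso R I M I M'" for M'
    using mod_iso_quot_ann_subset[OF i minimal_over_right_ideal[OF M]
      minimal_over_right_ideal[OF that(1)] that(2)]
      minimal_over_mem_carrier[OF that(1)] unfolding A_def quot_ann_def by blast
  ultimately have HA: "hom_comp R I M \<subseteq> A" unfolding hom_comp_def by blast
  have hc: "h \<in> carrier R" using h(2) unfolding quot_ann_def by blast
  obtain y where y: "y \<in> carrier R" "h \<otimes> y \<otimes> h = h" using vn hc unfolding von_neumann_regular_def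
    by blast
  have "y \<otimes> h \<in> quot_ann I M"
    using ideal.I_l_closed[OF ideal_quot_ann[OF i minimal_over_right_ideal[OF M]] h(2) y(1)] .
  then have "h \<otimes> (y \<otimes> h) \<in> I" using HA h(1) unfolding A_def by blast
  then show ?thesis using y hc by (simp add: m_assoc)
qed

text \<open>Well-foundedness of \<open>interval_psubset I H\<close> is the descending chain condition on the
  submodules of \<open>H/I\<close>.\<close>

definition interval_psubset :: "'a set \<Rightarrow> 'a set \<Rightarrow> ('a set \<times> 'a set) set" where
  "interval_psubset I H =
     {(J, J'). right_ideal R J \<and> right_ideal R J' \<and> I \<subseteq> J \<and> J \<subset> J' \<and> J' \<subseteq> H}"

lemma interval_psubset_wf:
  assumes rQ: "right_ideal R Q" and art: "artinian_factor R Q"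
    and recover: "\<And>J. right_ideal R J \<Longrightarrow> I \<subseteq> J \<Longrightarrow> J \<subseteq> H \<Longrightarrow> (J <+> Q) \<inter> H = J"
  shows "wf (interval_psubset I H)"
proof (rule ccontr)
  assume "\<not> wf (interval_psubset I H)"
  then obtain f where f: "\<And>n. (f (Suc n), f n) \<in> interval_psubset I H"
    unfolding wf_iff_no_infinite_down_chain by blast
  define g where "g n = f n <+> Q" for n
  have "right_ideal R (g n) \<and> Q \<subseteq> g n \<and> g (Suc n) \<subset> g n" for n
  proof -
    have fn: "right_ideal R (f (Suc n))" "right_ideal R (f n)" "I \<subseteq> f (Suc n)" "I \<subseteq> f n"
      "f (Suc n) \<subset> f n" "f n \<subseteq> H"
      using f[of n] unfolding interval_psubset_def by auto
    have "f (Suc n) <+> Q \<noteq> f n <+> Q"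
    proof
      assume eq: "f (Suc n) <+> Q = f n <+> Q"
      have "f (Suc n) = (f (Suc n) <+> Q) \<inter> H" using recover[OF fn(1,3)] fn(5,6) by auto
      also have "\<dots> = f n" using eq recover[OF fn(2,4,6)] by simp
      finally show False using fn(5) by blast
    qed
    then show ?thesis
      using right_ideal_set_add[OF fn(2) rQ] set_add_upper2[OF fn(2) rQ]
        set_add_mono[of "f (Suc n)" "f n" Q Q] fn(5) unfolding g_def by blast
  qed
  then show False using art unfolding artinian_factor_def by blast
qed

lemma hom_comp_interval_wf:
  assumes vn: "von_neumann_regular R" and pfa: "primitive_factors_artinian R"
    and i: "ideal I R" and M: "minimal_over R I M"
  shows "wf (interval_psubset I (hom_comp R I M))"
proof (rule interval_psubset_wf)
  define H where "H = hom_comp R I M"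
  define Q where "Q = quot_ann I M"
  show rQ: "right_ideal R (quot_ann I M)"
    by (rule ideal_right_ideal[OF ideal_quot_ann[OF i minimal_over_right_ideal[OF M]]])
  show "artinian_factor R (quot_ann I M)"
    using pfa primitive_ideal_quot_ann[OF M] unfolding primitive_factors_artinian_def by blast
  fix J assume J: "right_ideal R J" "I \<subseteq> J" "J \<subseteq> hom_comp R I M"
  have "H \<inter> Q \<subseteq> J" using hom_comp_Int_quot_ann[OF vn i M] J(2) unfolding H_def Q_def by blast
  then have "J <+> (H \<inter> Q) = J"
    using set_add_absorb1[OF J(1) right_ideal_Int[OF right_ideal_hom_comp[OF M] rQ]]
    unfolding H_def Q_def by blast
  moreover have "(J <+> Q) \<inter> H = J <+> (H \<inter> Q)"
    using right_ideal_modular[OF J(1) rQ right_ideal_hom_comp[OF M] J(3)]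
    unfolding H_def Q_def by (simp add: Int_commute)
  ultimately show "(J <+> quot_ann I M) \<inter> hom_comp R I M = J" unfolding H_def Q_def by simp
qed

text \<open>The complement is \<open>I + (1 - e) J\<close> for an idempotent \<open>e\<close> generating \<open>M/I\<close>.\<close>

lemma minimal_over_summand:
  assumes vn: "von_neumann_regular R" and i: "ideal I R"
    and J: "right_ideal R J" "I \<subseteq> J" and M: "minimal_over R I M" "M \<subseteq> J"
  obtains J' where "right_ideal R J'" "I \<subseteq> J'" "J' \<subset> J" "J \<subseteq> M <+> J'"
proof -
  note rI = ideal_right_ideal[OF i]
  obtain e where e: "e \<in> M" "e \<notin> I" "e \<otimes> e = e"
    using minimal_over_idempotent[OF vn i M(1)] by metis
  have ec: "e \<in> carrier R" using minimal_over_mem_carrier[OF M(1) e(1)] .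
  define u where "u = \<one> \<ominus> e"
  have uc: "u \<in> carrier R" unfolding u_def using ec by simp
  define J' where "J' = I <+> (\<otimes>) u ` J"
  have ruJ: "right_ideal R ((\<otimes>) u ` J)" by (rule right_ideal_left_image[OF J(1) uc])
  have rJ': "right_ideal R J'" and IJ': "I \<subseteq> J'" unfolding J'_def
    by (fact right_ideal_set_add[OF rI ruJ], fact set_add_upper1[OF rI ruJ])
  have uj: "u \<otimes> j = j \<ominus> e \<otimes> j" if "j \<in> carrier R" for j
    unfolding u_def using ec that by (simp add: minus_eq l_distr l_minus)
  have ej: "e \<otimes> j \<in> J" "e \<otimes> j \<in> M" if "j \<in> carrier R" for j
    using right_idealD(5)[OF J(1)] right_idealD(5)[OF minimal_over_right_ideal[OF M(1)]] e(1) M(2)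
      that
    by blast+
  have "(\<otimes>) u ` J \<subseteq> J"
    using uj ej(1) right_ideal_minus_closed[OF J(1)] right_ideal_mem_carrier[OF J(1)] by auto
  then have J'J: "J' \<subseteq> J" unfolding J'_def using set_add_least[OF J] by blast
  have "J \<subseteq> M <+> J'"
  proof
    fix j assume j: "j \<in> J"
    have jc: "j \<in> carrier R" using right_ideal_mem_carrier[OF J(1) j] .
    have "u \<otimes> j \<in> J'" unfolding J'_def using set_add_upper2[OF rI ruJ] j by blast
    moreover have "j = e \<otimes> j \<oplus> u \<otimes> j" using uj[OF jc] ec jc by (simp add: minus_eq a_lcomm r_neg)
    ultimately show "j \<in> M <+> J'" using ej(2)[OF jc] by (auto simp: set_add_iff)
  qed
  moreover have "e \<notin> J'"
  proof
    assume "e \<in> J'"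
    then obtain p j where pj: "p \<in> I" "j \<in> J" "e = p \<oplus> u \<otimes> j"
      unfolding J'_def by (auto simp: set_add_iff)
    have pc: "p \<in> carrier R" "j \<in> carrier R"
      using pj ideal.Icarr[OF i] right_ideal_mem_carrier[OF J(1)] by auto
    have "e \<otimes> u = \<zero>" unfolding u_def using ec e(3) by (simp add: minus_eq r_distr r_minus r_neg)
    then have "e = e \<otimes> p" using pj(3) pc ec uc e(3) by (simp add: r_distr m_assoc[symmetric])
    then show False using ideal.I_l_closed[OF i pj(1) ec] e(2) by simp
  qed
  ultimately show ?thesis using that rJ' IJ' J'J e(1) M(2) by blast
qed

lemma set_add_simples_shrink:
  assumes vn: "von_neumann_regular R" and i: "ideal I R"
    and H: "right_ideal R H" "H \<subseteq> soc_succ R I"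
    and J0: "right_ideal R J0" "I \<subseteq> J0" "J0 \<subseteq> H" "J0 \<noteq> I"
    and Ms: "\<forall>N\<in>set Ms. minimal_over R I N" "H = J0 <+> set_add_list Ms I"
  obtains J1 M1 where "right_ideal R J1" "I \<subseteq> J1" "J1 \<subset> J0" "minimal_over R I M1"
    "H = J1 <+> set_add_list (M1 # Ms) I"
proof -
  note rI = ideal_right_ideal[OF i]
  have rS: "right_ideal R (set_add_list Ms I)" using right_ideal_sum_simples[OF rI Ms(1)] by blast
  obtain M1 where M1: "minimal_over R I M1" "M1 \<subseteq> J0"
    using minimal_over_below_soc_succ[OF rI J0(1,2) _ J0(4)] J0(3) H(2) by blast
  obtain J1 where J1: "right_ideal R J1" "I \<subseteq> J1" "J1 \<subset> J0" "J0 \<subseteq> M1 <+> J1"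
    using minimal_over_summand[OF vn i J0(1,2) M1] by blast
  have carr: "J1 \<subseteq> carrier R" "M1 \<subseteq> carrier R" "set_add_list Ms I \<subseteq> carrier R"
    using right_idealD(1) J1(1) minimal_over_right_ideal[OF M1(1)] rS by blast+
  have "H \<subseteq> (M1 <+> J1) <+> set_add_list Ms I" using Ms(2) set_add_mono[OF J1(4) order_refl] by simp
  also have "\<dots> = J1 <+> set_add_list (M1 # Ms) I"
    using set_add_comm[OF carr(2,1)] set_add_assoc[OF carr] by simp
  finally have "H \<subseteq> J1 <+> set_add_list (M1 # Ms) I" .
  moreover have "set_add_list Ms I \<subseteq> H" using Ms(2) set_add_upper2[OF J0(1) rS] by blast
  then have "M1 <+> set_add_list Ms I \<subseteq> H" using set_add_least[OF H(1)] M1(2) J0(3) by blast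
  then have "J1 <+> set_add_list (M1 # Ms) I \<subseteq> H" using set_add_least[OF H(1)] J1(3) J0(3) by auto
  ultimately show ?thesis using that J1(1-3) M1(1) by blast
qed

lemma finite_sum_simples_of_wf:
  assumes vn: "von_neumann_regular R" and i: "ideal I R"
    and H: "right_ideal R H" "I \<subseteq> H" "H \<subseteq> soc_succ R I"
    and wf: "wf (interval_psubset I H)"
  shows "\<exists>Ms. (\<forall>N\<in>set Ms. minimal_over R I N) \<and> H = set_add_list Ms I"
proof -
  note rI = ideal_right_ideal[OF i]
  define CC where "CC = {J. right_ideal R J \<and> I \<subseteq> J \<and> J \<subseteq> H \<and>
    (\<exists>Ms. (\<forall>N\<in>set Ms. minimal_over R I N) \<and> H = J <+> set_add_list Ms I)}"
  have "H \<in> CC" unfolding CC_def using H set_add_absorb1[OF H(1) rI H(2)]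
    by (auto intro!: exI[of _ "[]"])
  then obtain J0 where J0: "J0 \<in> CC" "\<And>J. (J, J0) \<in> interval_psubset I H \<Longrightarrow> J \<notin> CC"
    using wfE_min[OF wf] by metis
  obtain Ms where Ms: "\<forall>N\<in>set Ms. minimal_over R I N" "H = J0 <+> set_add_list Ms I"
    and rJ0: "right_ideal R J0" "I \<subseteq> J0" "J0 \<subseteq> H"
    using J0(1) unfolding CC_def by blast
  have "J0 = I"
  proof (rule ccontr)
    assume "J0 \<noteq> I"
    then obtain J1 M1 where J1: "right_ideal R J1" "I \<subseteq> J1" "J1 \<subset> J0" "minimal_over R I M1"
      "H = J1 <+> set_add_list (M1 # Ms) I"
      using set_add_simples_shrink[OF vn i H(1,3) rJ0 _ Ms] by blast
    then have "J1 \<in> CC" unfolding CC_def using rJ0(3) Ms(1)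
      by (intro CollectI conjI exI[of _ "M1 # Ms"]) auto
    moreover have "(J1, J0) \<in> interval_psubset I H"
      unfolding interval_psubset_def using J1 rJ0 by blast
    ultimately show False using J0(2) by blast
  qed
  moreover have "right_ideal R (set_add_list Ms I)" "I \<subseteq> set_add_list Ms I"
    using right_ideal_sum_simples[OF rI Ms(1)] by auto
  ultimately show ?thesis using Ms set_add_absorb2[OF rI] by auto
qed

lemma hom_comp_finite_length:
  assumes vn: "von_neumann_regular R" and pfa: "primitive_factors_artinian R"
    and i: "ideal I R" and M: "minimal_over R I M"
  shows "\<exists>Ms. (\<forall>N\<in>set Ms. minimal_over R I N) \<and> hom_comp R I M = set_add_list Ms I"
  using finite_sum_simples_of_wf[OF vn i right_ideal_hom_comp[OF M] hom_comp_ge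
      hom_comp_subset_soc_succ[OF M] hom_comp_interval_wf[OF vn pfa i M]] .

lemma left_mult_mem_hom_comp:
  assumes i: "ideal I R" and M: "minimal_over R I M" and a: "a \<in> carrier R" and m: "m \<in> M"
  shows "a \<otimes> m \<in> hom_comp R I M"
  using minimal_over_left_mult_cases[OF i M a]
proof
  assume "\<forall>m\<in>M. a \<otimes> m \<in> I"
  then show ?thesis using m hom_comp_ge by blast
next
  assume "minimal_over R I (I <+> (\<otimes>) a ` M) \<and> mod_iso R I M I (I <+> (\<otimes>) a ` M)"
  then have "I <+> (\<otimes>) a ` M \<subseteq> hom_comp R I M" unfolding hom_comp_def by blast
  moreover have "a \<otimes> m \<in> I <+> (\<otimes>) a ` M"
    using set_add_upper2[OF ideal_right_ideal[OF i]
      right_ideal_left_image[OF minimal_over_right_ideal[OF M] a]] m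
    by blast
  ultimately show ?thesis by blast
qed

lemma hom_comp_eq_if_comp_mult_one:
  assumes vn: "von_neumann_regular R" and pfa: "primitive_factors_artinian R"
    and i: "ideal I R" and M: "minimal_over R I M" and n: "comp_mult R I (hom_comp R I M) = 1"
  shows "hom_comp R I M = M"
proof -
  define H where "H = hom_comp R I M"
  define P where
    "P n \<longleftrightarrow> (\<exists>Ms. length Ms = n \<and> (\<forall>M\<in>set Ms. minimal_over R I M) \<and> H = set_add_list Ms I)"
    for n
  obtain Ms where "\<forall>N\<in>set Ms. minimal_over R I N" "H = set_add_list Ms I"
    using hom_comp_finite_length[OF vn pfa i M] unfolding H_def by blast
  then have "P (length Ms)" unfolding P_def by blast
  then have "P (LEAST n. P n)" by (rule LeastI)
  moreover have "(LEAST n. P n) = 1" using n unfolding comp_mult_def P_def H_def by simp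
  ultimately obtain M' where M': "minimal_over R I M'" "H = M' <+> I"
    unfolding P_def by (auto simp: length_Suc_conv)
  then have "H = M'" using set_add_absorb1[OF minimal_overD(1,2,3)[OF M'(1)]] by simp
  moreover have "M \<subseteq> H" unfolding H_def by (rule minimal_over_subset_hom_comp[OF i M])
  ultimately show ?thesis
    using minimal_over_between[OF M'(1) minimal_over_right_ideal[OF M] minimal_over_subset[OF M]]
      minimal_over_neq[OF M] unfolding H_def by blast
qed

lemma commutative_quotient_if_components_simple:
  assumes vn: "von_neumann_regular R" and sa: "semiartinian R"
    and pfa: "primitive_factors_artinian R"
    and sI: "socle_term R I"
    and comps: "\<forall>H\<in>hom_comps R I. commutative_ring (comp_field R I H) \<and> comp_mult R I H = 1"
  shows "commutative_ring (R Quot I)"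
  unfolding commutative_ring_Quot_iff[OF socle_term_ideal[OF sI]]
proof (intro ballI)
  fix a b assume a: "a \<in> carrier R" and b: "b \<in> carrier R"
  have i: "ideal I R" using socle_term_ideal[OF sI] .
  have "(a \<otimes> b \<ominus> b \<otimes> a) \<otimes> m \<in> I" if M: "minimal_over R I M" and m: "m \<in> M" for M m
  proof -
    have "hom_comp R I M \<in> hom_comps R I" unfolding hom_comps_def using M by blast
    then have HM: "hom_comp R I M = M" and cK: "commutative_ring (comp_field R I (hom_comp R I M))"
      using comps hom_comp_eq_if_comp_mult_one[OF vn pfa i M] by auto
    then have cE: "commutative_ring (End_ring R I M)"
      using comp_simple_self[OF M] unfolding comp_field_def by simp
    have stable: "c \<otimes> x \<in> M" if "c \<in> carrier R" "x \<in> M" for c x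
      using left_mult_mem_hom_comp[OF i M that] HM by simp
    have mc: "m \<in> carrier R" using minimal_over_mem_carrier[OF M m] .
    have "lmult_end I (a \<otimes> b) M = lmult_end I (b \<otimes> a) M"
      using lmult_end_mult[OF i M] lmult_end_carrier[OF i M] cE a b stable
      unfolding commutative_ring_def by metis
    then have "cong_mod I ((a \<otimes> b) \<otimes> m) ((b \<otimes> a) \<otimes> m)"
      using lmult_end_eq_iff[OF i M] a b m by simp
    then show ?thesis using a b mc by (simp add: cong_mod_def l_minus minus_eq l_distr)
  qed
  then have "a \<otimes> b \<ominus> b \<otimes> a \<in> I" using socle_faithful[OF vn sa sI] a b by simp
  then show "cong_mod I (a \<otimes> b) (b \<otimes> a)" using a b by (simp add: cong_mod_def)
qed

end

section \<open>The embedding of a commutative layer into a product of fields\<close>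

lemma prod_ring_carrierD:
  "f \<in> carrier (prod_ring B K) \<Longrightarrow> f \<in> extensional B \<and> (\<forall>b\<in>B. f b \<in> carrier (K b))"
  unfolding prod_ring_def by (auto simp: PiE_def)

lemma abelian_group_prod_ring:
  assumes K: "\<And>b. b \<in> B \<Longrightarrow> ring (K b)"
  shows "abelian_group (prod_ring B K)"
proof (rule abelian_groupI)
  fix x y z assume x: "x \<in> carrier (prod_ring B K)" and y: "y \<in> carrier (prod_ring B K)"
    and z: "z \<in> carrier (prod_ring B K)"
  note xyz = prod_ring_carrierD[OF x] prod_ring_carrierD[OF y] prod_ring_carrierD[OF z]
  show "x \<oplus>\<^bsub>prod_ring B K\<^esub> y \<in> carrier (prod_ring B K)"
    using xyz ring.ring_simprules(1)[OF K] by (auto simp: prod_ring_def)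
  show "(x \<oplus>\<^bsub>prod_ring B K\<^esub> y) \<oplus>\<^bsub>prod_ring B K\<^esub> z =
      x \<oplus>\<^bsub>prod_ring B K\<^esub> (y \<oplus>\<^bsub>prod_ring B K\<^esub> z)"
    using xyz ring.ring_simprules(7)[OF K] by (auto simp: prod_ring_def intro!: restrict_ext)
  show "x \<oplus>\<^bsub>prod_ring B K\<^esub> y = y \<oplus>\<^bsub>prod_ring B K\<^esub> x"
    using xyz ring.ring_simprules(10)[OF K] by (auto simp: prod_ring_def intro!: restrict_ext)
  show "\<zero>\<^bsub>prod_ring B K\<^esub> \<oplus>\<^bsub>prod_ring B K\<^esub> x = x"
    using xyz ring.ring_simprules(8)[OF K]
    by (auto simp: prod_ring_def intro!: extensionalityI[OF restrict_extensional])
  show "\<exists>y\<in>carrier (prod_ring B K). y \<oplus>\<^bsub>prod_ring B K\<^esub> x = \<zero>\<^bsub>prod_ring B K\<^esub>"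
    using xyz ring.ring_simprules(3,9)[OF K]
    by (intro bexI[of _ "\<lambda>b\<in>B. \<ominus>\<^bsub>K b\<^esub> x b"]) (auto simp: prod_ring_def intro!: restrict_ext)
qed (use ring.ring_simprules(2)[OF K] in \<open>auto simp: prod_ring_def\<close>)

lemma monoid_prod_ring:
  assumes K: "\<And>b. b \<in> B \<Longrightarrow> ring (K b)"
  shows "monoid (prod_ring B K)"
proof (rule monoidI)
  fix x y z assume x: "x \<in> carrier (prod_ring B K)" and y: "y \<in> carrier (prod_ring B K)"
    and z: "z \<in> carrier (prod_ring B K)"
  note xyz = prod_ring_carrierD[OF x] prod_ring_carrierD[OF y] prod_ring_carrierD[OF z]
  show "x \<otimes>\<^bsub>prod_ring B K\<^esub> y \<in> carrier (prod_ring B K)"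
    using xyz ring.ring_simprules(5)[OF K] by (auto simp: prod_ring_def)
  show "(x \<otimes>\<^bsub>prod_ring B K\<^esub> y) \<otimes>\<^bsub>prod_ring B K\<^esub> z =
      x \<otimes>\<^bsub>prod_ring B K\<^esub> (y \<otimes>\<^bsub>prod_ring B K\<^esub> z)"
    using xyz ring.ring_simprules(11)[OF K] by (auto simp: prod_ring_def intro!: restrict_ext)
  show "\<one>\<^bsub>prod_ring B K\<^esub> \<otimes>\<^bsub>prod_ring B K\<^esub> x = x" "x \<otimes>\<^bsub>prod_ring B K\<^esub> \<one>\<^bsub>prod_ring B K\<^esub> = x"
    using xyz ring.ring_simprules(12)[OF K] monoid.r_one[OF ring.is_monoid[OF K]]
    by (auto simp: prod_ring_def intro!: extensionalityI[OF restrict_extensional])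
qed (use ring.ring_simprules(6)[OF K] in \<open>auto simp: prod_ring_def\<close>)

lemma ring_prod_ring:
  assumes K: "\<And>b. b \<in> B \<Longrightarrow> ring (K b)"
  shows "ring (prod_ring B K)"
proof (rule ringI[OF abelian_group_prod_ring[OF K] monoid_prod_ring[OF K]])
  fix x y z assume x: "x \<in> carrier (prod_ring B K)" and y: "y \<in> carrier (prod_ring B K)"
    and z: "z \<in> carrier (prod_ring B K)"
  note xyz = prod_ring_carrierD[OF x] prod_ring_carrierD[OF y] prod_ring_carrierD[OF z]
  show "(x \<oplus>\<^bsub>prod_ring B K\<^esub> y) \<otimes>\<^bsub>prod_ring B K\<^esub> z =
      x \<otimes>\<^bsub>prod_ring B K\<^esub> z \<oplus>\<^bsub>prod_ring B K\<^esub> y \<otimes>\<^bsub>prod_ring B K\<^esub> z"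
    using xyz ring.ring_simprules(13)[OF K] by (auto simp: prod_ring_def intro!: restrict_ext)
  show "z \<otimes>\<^bsub>prod_ring B K\<^esub> (x \<oplus>\<^bsub>prod_ring B K\<^esub> y) =
      z \<otimes>\<^bsub>prod_ring B K\<^esub> x \<oplus>\<^bsub>prod_ring B K\<^esub> z \<otimes>\<^bsub>prod_ring B K\<^esub> y"
    using xyz ring.ring_simprules(23)[OF K] by (auto simp: prod_ring_def intro!: restrict_ext)
qed

lemma (in ring) right_ideal_image:
  assumes S: "ring S" and h: "h \<in> ring_hom R S" and surj: "h ` carrier R = carrier S"
    and A: "right_ideal R A"
  shows "right_ideal S (h ` A)"
proof -
  interpret S: ring S by (rule S)
  interpret hom: ring_hom_ring R S h by (rule ring_hom_ringI2[OF ring_axioms S h])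
  note Ac = right_ideal_mem_carrier[OF A]
  show ?thesis
    unfolding S.right_ideal_iff
  proof (intro conjI ballI)
    show "h ` A \<subseteq> carrier S" using Ac by auto
    show "\<zero>\<^bsub>S\<^esub> \<in> h ` A" using right_idealD(2)[OF A] hom.hom_zero by force
    fix x assume "x \<in> h ` A"
    then obtain a where a: "a \<in> A" "x = h a" by blast
    have ac: "a \<in> carrier R" using Ac[OF a(1)] .
    show "x \<oplus>\<^bsub>S\<^esub> y \<in> h ` A" if y: "y \<in> h ` A" for y
    proof -
      obtain b where b: "b \<in> A" "y = h b" using y by blast
      have "x \<oplus>\<^bsub>S\<^esub> y = h (a \<oplus> b)" using a b ac Ac[OF b(1)] by simp
      then show ?thesis using right_idealD(3)[OF A a(1) b(1)] by blast
    qed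
    have "\<ominus>\<^bsub>S\<^esub> x = h (\<ominus> a)"
      using a(2) ac S.minus_equality[of "h (\<ominus> a)" "h a"] hom.hom_add[of "\<ominus> a" a]
        by (simp add: l_neg)
    then show "\<ominus>\<^bsub>S\<^esub> x \<in> h ` A" using right_idealD(4)[OF A a(1)] by blast
    show "x \<otimes>\<^bsub>S\<^esub> r \<in> h ` A" if r: "r \<in> carrier S" for r
    proof -
      obtain c where c: "c \<in> carrier R" "r = h c" using r surj by blast
      have "x \<otimes>\<^bsub>S\<^esub> r = h (a \<otimes> c)" using a c ac by simp
      then show ?thesis using right_idealD(5)[OF A a(1) c(1)] by blast
    qed
  qed
qed

locale comm_layer = ring R for R (structure) +
  fixes I
  assumes vn: "von_neumann_regular R" and sa: "semiartinian R" and sI: "socle_term R I"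
    and comm: "\<forall>a\<in>carrier R. \<forall>b\<in>carrier R. cong_mod I (a \<otimes> b) (b \<otimes> a)"
begin

lemma ideal_I: "ideal I R"
  using socle_term_ideal[OF sI] .

abbreviation simples :: "'a set set" where
  "simples \<equiv> {M. minimal_over R I M}"

abbreviation End_prod :: "('a set \<Rightarrow> 'a set \<Rightarrow> 'a set) ring" where
  "End_prod \<equiv> prod_ring simples (comp_field R I)"

lemma hom_comps_eq: "hom_comps R I = simples"
  using comm_hom_comps_eq[OF ideal_I comm vn] .

lemma comp_field_eq: "M \<in> simples \<Longrightarrow> comp_field R I M = End_ring R I M"
  unfolding comp_field_def using comp_simple_self by simp

lemma simple_stable: "a \<in> carrier R \<Longrightarrow> M \<in> simples \<Longrightarrow> x \<in> M \<Longrightarrow> a \<otimes> x \<in> M"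
  using comm_quotient_left_mult_closed[OF ideal_I comm] minimal_overD(1,3) by blast

lemma lmult_end_carrier_simple:
  "a \<in> carrier R \<Longrightarrow> M \<in> simples \<Longrightarrow> lmult_end I a M \<in> carrier (End_ring R I M)"
  using lmult_end_carrier[OF ideal_I _ _ simple_stable] by simp

lemma lmult_end_mult_simple:
  "a \<in> carrier R \<Longrightarrow> b \<in> carrier R \<Longrightarrow> M \<in> simples \<Longrightarrow>
    lmult_end I (a \<otimes> b) M = lmult_end I a M \<otimes>\<^bsub>End_ring R I M\<^esub> lmult_end I b M"
  using lmult_end_mult[OF ideal_I _ _ _ simple_stable] by simp

lemma lmult_end_ring_hom: "M \<in> simples \<Longrightarrow> (\<lambda>a. lmult_end I a M) \<in> ring_hom R (End_ring R I M)"
  by (rule ring_hom_memI)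
    (simp_all add: lmult_end_carrier_simple lmult_end_mult_simple lmult_end_add[OF ideal_I]
      lmult_end_one[OF ideal_I])

lemma ring_End_ring:
  assumes M: "M \<in> simples"
  shows "ring (End_ring R I M)"
proof -
  have "(\<lambda>a. lmult_end I a M) ` carrier R = carrier (End_ring R I M)"
  proof
    show "(\<lambda>a. lmult_end I a M) ` carrier R \<subseteq> carrier (End_ring R I M)"
      using lmult_end_carrier_simple M by blast
    show "carrier (End_ring R I M) \<subseteq> (\<lambda>a. lmult_end I a M) ` carrier R"
    proof
      fix \<phi> assume "\<phi> \<in> carrier (End_ring R I M)"
      then obtain c where "c \<in> carrier R" "\<phi> = lmult_end I c M"
        using End_ring_eq_lmult_end[OF vn ideal_I] M by blast
      then show "\<phi> \<in> (\<lambda>a. lmult_end I a M) ` carrier R" by blast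
    qed
  qed
  then show ?thesis
    using ring_hom_imp_img_ring[OF lmult_end_ring_hom[OF M]] lmult_end_zero[OF ideal_I] M by simp
qed

lemma ring_End_prod: "ring End_prod"
  by (rule ring_prod_ring) (simp add: comp_field_eq ring_End_ring)

definition rep :: "'a \<Rightarrow> 'a set \<Rightarrow> 'a set \<Rightarrow> 'a set" where
  "rep a = (\<lambda>M\<in>simples. lmult_end I a M)"

lemma rep_apply: "M \<in> simples \<Longrightarrow> rep a M = lmult_end I a M"
  unfolding rep_def by simp

lemma rep_ring_hom: "rep \<in> ring_hom R End_prod"
proof (rule ring_hom_memI)
  show "rep x \<in> carrier End_prod" if "x \<in> carrier R" for x
    using lmult_end_carrier_simple[OF that] comp_field_eq unfolding rep_def prod_ring_def by auto
  show "rep (x \<otimes> y) = rep x \<otimes>\<^bsub>End_prod\<^esub> rep y" if "x \<in> carrier R" "y \<in> carrier R" for x y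
    unfolding rep_def
    by (simp add: prod_ring_def comp_field_eq lmult_end_mult_simple that cong: restrict_cong)
  show "rep (x \<oplus> y) = rep x \<oplus>\<^bsub>End_prod\<^esub> rep y" if "x \<in> carrier R" "y \<in> carrier R" for x y
    unfolding rep_def
    by (simp add: prod_ring_def comp_field_eq lmult_end_add[OF ideal_I] that cong: restrict_cong)
  show "rep \<one> = \<one>\<^bsub>End_prod\<^esub>"
    unfolding rep_def
    by (simp add: prod_ring_def comp_field_eq lmult_end_one[OF ideal_I] cong: restrict_cong)
qed

lemma End_prod_zero: "\<zero>\<^bsub>End_prod\<^esub> = (\<lambda>M\<in>simples. \<zero>\<^bsub>End_ring R I M\<^esub>)"
  by (simp add: prod_ring_def comp_field_eq cong: restrict_cong)

lemma rep_eq_zero_iff: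
  assumes a: "a \<in> carrier R"
  shows "rep a = \<zero>\<^bsub>End_prod\<^esub> \<longleftrightarrow> a \<in> I"
proof -
  have "rep a = \<zero>\<^bsub>End_prod\<^esub> \<longleftrightarrow> (\<forall>M\<in>simples. lmult_end I a M = \<zero>\<^bsub>End_ring R I M\<^esub>)"
    unfolding End_prod_zero rep_def by (metis (no_types, lifting) restrict_apply' restrict_ext)
  also have "\<dots> \<longleftrightarrow> (\<forall>M\<in>simples. \<forall>x\<in>M. a \<otimes> x \<in> I)"
    using lmult_end_zero_iff[OF ideal_I _ a] by simp
  also have "\<dots> \<longleftrightarrow> a \<in> I"
    using socle_faithful[OF vn sa sI a] ideal.I_r_closed[OF ideal_I] minimal_over_mem_carrier[of I]
    by blast
  finally show ?thesis .
qed

abbreviation rep_ring :: "('a set \<Rightarrow> 'a set \<Rightarrow> 'a set) ring" where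
  "rep_ring \<equiv> End_prod\<lparr>carrier := rep ` carrier R\<rparr>"

lemma rep_zero: "rep \<zero> = \<zero>\<^bsub>End_prod\<^esub>"
  using rep_eq_zero_iff[OF zero_closed] right_idealD(2)[OF ideal_right_ideal[OF ideal_I]] by simp

lemma ring_rep_ring: "ring rep_ring"
  using ring_hom_imp_img_ring[OF rep_ring_hom] rep_zero by simp

lemma subring_rep_image: "subring (rep ` carrier R) End_prod"
  using ring.ring_incl_imp_subring[OF ring_End_prod _ ring_rep_ring]
    ring_hom_closed[OF rep_ring_hom]
  by blast

lemma rep_ring_hom_image: "rep \<in> ring_hom R rep_ring"
  using rep_ring_hom unfolding ring_hom_def by auto

lemma Quot_iso_rep_ring: "R Quot I \<simeq> rep_ring"
proof -
  interpret hom: ring_hom_ring R rep_ring rep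
    by (rule ring_hom_ringI2[OF ring_axioms ring_rep_ring rep_ring_hom_image])
  have "a_kernel R rep_ring rep = I"
    using rep_eq_zero_iff ideal.Icarr[OF ideal_I] unfolding a_kernel_def kernel_def by auto
  then show ?thesis using hom.FactRing_iso by simp
qed

end

context comm_layer
begin

definition ann_support :: "'a \<Rightarrow> 'a set set" where
  "ann_support a = {M \<in> simples. \<exists>x\<in>M. a \<otimes> x \<notin> I}"

lemma rep_apply_eq_zero_iff:
  "M \<in> simples \<Longrightarrow> a \<in> carrier R \<Longrightarrow> rep a M = \<zero>\<^bsub>comp_field R I M\<^esub> \<longleftrightarrow> (\<forall>x\<in>M. a \<otimes> x \<in> I)"
  using lmult_end_zero_iff[OF ideal_I] comp_field_eq rep_apply by simp

lemma support_rep: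
  "a \<in> carrier R \<Longrightarrow> {M \<in> simples. rep a M \<noteq> \<zero>\<^bsub>comp_field R I M\<^esub>} = ann_support a"
  using rep_apply_eq_zero_iff unfolding ann_support_def by blast

lemma simple_orthogonal:
  assumes M: "M \<in> simples" and M0: "M0 \<in> simples" and ne: "M \<noteq> M0" and e0: "e0 \<in> M0" and x: "x \<in> M"
  shows "e0 \<otimes> x \<in> I"
proof -
  have "e0 \<otimes> x \<in> M0"
    using right_idealD(5)[OF minimal_over_right_ideal e0 minimal_over_mem_carrier] M0 M x by blast
  moreover have "e0 \<otimes> x \<in> M" using simple_stable minimal_over_mem_carrier M0 M e0 x by blast
  ultimately show ?thesis using minimal_over_Int M M0 ne by blast
qed

lemma ann_support_mult_idempotent:
  assumes a: "a \<in> carrier R" and M0: "M0 \<in> simples" and e0: "e0 \<in> M0"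
  shows "ann_support (a \<otimes> e0) \<subseteq> {M0}"
proof
  fix M assume M: "M \<in> ann_support (a \<otimes> e0)"
  have e0c: "e0 \<in> carrier R" using minimal_over_mem_carrier M0 e0 by blast
  show "M \<in> {M0}"
  proof (rule ccontr)
    assume ne: "M \<notin> {M0}"
    have MS: "M \<in> simples" using M unfolding ann_support_def by blast
    have "a \<otimes> (e0 \<otimes> x) \<in> I" if "x \<in> M" for x
      using ideal.I_l_closed[OF ideal_I simple_orthogonal[OF MS M0 _ e0 that] a] ne by blast
    then show False
      using M a e0c minimal_over_mem_carrier unfolding ann_support_def by (auto simp: m_assoc)
  qed
qed

lemma mult_idempotent_notin:
  assumes c: "c \<in> carrier R" and M0: "M0 \<in> simples" and x0: "x0 \<in> M0" "c \<otimes> x0 \<notin> I"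
    and e0: "e0 \<in> M0" "\<And>m. m \<in> M0 \<Longrightarrow> cong_mod I (e0 \<otimes> m) m"
  shows "c \<otimes> e0 \<notin> I"
proof
  assume "c \<otimes> e0 \<in> I"
  have x0c: "x0 \<in> carrier R" and e0c: "e0 \<in> carrier R"
    using minimal_over_mem_carrier M0 x0(1) e0(1) by blast+
  have "c \<otimes> (e0 \<otimes> x0) \<in> I"
    using ideal.I_r_closed[OF ideal_I \<open>c \<otimes> e0 \<in> I\<close> x0c] c e0c x0c by (simp add: m_assoc)
  moreover have "cong_mod I (c \<otimes> (e0 \<otimes> x0)) (c \<otimes> x0)"
    using cong_mod_mult_left[OF ideal_I c e0(2)[OF x0(1)]] .
  ultimately show False using x0(2) cong_mod_mem[OF ideal_I cong_mod_sym[OF ideal_I]] by blast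
qed

lemma rep_modify_component:
  assumes a: "a \<in> carrier R" and c: "c \<in> carrier R" and M0: "M0 \<in> simples"
    and kill: "\<forall>x\<in>M0. a \<otimes> x \<in> I"
  obtains a' where "a' \<in> carrier R" "rep a' M0 = rep c M0"
    "\<And>M x. M \<in> simples \<Longrightarrow> M \<noteq> M0 \<Longrightarrow> x \<in> M \<Longrightarrow> cong_mod I (a' \<otimes> x) (a \<otimes> x)"
proof -
  obtain e0 where e0: "e0 \<in> M0" "\<And>m. m \<in> M0 \<Longrightarrow> cong_mod I (e0 \<otimes> m) m"
    using minimal_over_idempotent[OF vn ideal_I] M0 by blast
  have e0c: "e0 \<in> carrier R" using minimal_over_mem_carrier M0 e0(1) by blast
  define a' where "a' = a \<oplus> c \<otimes> e0"
  have a'c: "a' \<in> carrier R" unfolding a'_def using a c e0c by simp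
  have a'x: "a' \<otimes> x = a \<otimes> x \<oplus> c \<otimes> (e0 \<otimes> x)" if "x \<in> carrier R" for x
    unfolding a'_def using a c e0c that by (simp add: l_distr m_assoc)
  have "cong_mod I (a' \<otimes> x) (c \<otimes> x)" if "x \<in> M0" for x
    using cong_mod_add[OF ideal_I cong_mod_zeroI[OF ideal_I]
      cong_mod_mult_left[OF ideal_I c e0(2)[OF that]]]
      a'x kill that minimal_over_mem_carrier M0 c by simp
  then have "rep a' M0 = rep c M0"
    using rep_apply[OF M0] lmult_end_eq_iff[OF ideal_I _ a'c c] M0 by simp
  moreover have "cong_mod I (a' \<otimes> x) (a \<otimes> x)" if "M \<in> simples" "M \<noteq> M0" "x \<in> M" for M x
    using cong_mod_add_ideal[OF ideal_I _
      ideal.I_l_closed[OF ideal_I simple_orthogonal[OF that(1) M0 that(2) e0(1) that(3)] c]]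
      a'x a minimal_over_mem_carrier that by simp
  ultimately show ?thesis using that a'c by blast
qed

lemma rep_interpolate:
  assumes f: "f \<in> carrier End_prod"
  shows "finite F \<Longrightarrow> F \<subseteq> simples \<Longrightarrow> \<exists>a\<in>carrier R. \<forall>M\<in>simples.
    (M \<in> F \<longrightarrow> rep a M = f M) \<and> (M \<notin> F \<longrightarrow> (\<forall>x\<in>M. a \<otimes> x \<in> I))"
proof (induction F rule: finite_induct)
  case empty
  have "\<forall>M\<in>simples. \<forall>x\<in>M. \<zero> \<otimes> x \<in> I"
    using minimal_over_mem_carrier right_idealD(2)[OF ideal_right_ideal[OF ideal_I]] by simp
  then show ?case by blast
next
  case (insert M0 F)
  then have M0: "M0 \<in> simples" by blast
  obtain a where a: "a \<in> carrier R"
    "\<forall>M\<in>simples. (M \<in> F \<longrightarrow> rep a M = f M) \<and> (M \<notin> F \<longrightarrow> (\<forall>x\<in>M. a \<otimes> x \<in> I))"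
    using insert by blast
  have "f M0 \<in> carrier (comp_field R I M0)" using f M0 unfolding prod_ring_def by auto
  then have "f M0 \<in> carrier (End_ring R I M0)" using comp_field_eq[OF M0] by simp
  then obtain c where c: "c \<in> carrier R" "f M0 = lmult_end I c M0"
    using End_ring_eq_lmult_end[OF vn ideal_I] M0 by blast
  obtain a' where a': "a' \<in> carrier R" "rep a' M0 = rep c M0"
    "\<And>M x. M \<in> simples \<Longrightarrow> M \<noteq> M0 \<Longrightarrow> x \<in> M \<Longrightarrow> cong_mod I (a' \<otimes> x) (a \<otimes> x)"
    using rep_modify_component[OF a(1) c(1) M0] a(2) M0 insert.hyps(2) by blast
  have "(M \<in> insert M0 F \<longrightarrow> rep a' M = f M) \<and> (M \<notin> insert M0 F \<longrightarrow> (\<forall>x\<in>M. a' \<otimes> x \<in> I))"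
    if M: "M \<in> simples" for M
  proof (cases "M = M0")
    case True
    then show ?thesis using a'(2) c(2) rep_apply[OF M0] by simp
  next
    case False
    have "rep a' M = rep a M"
      using lmult_end_eq_iff[OF ideal_I _ a'(1) a(1)] M a'(3)[OF M False] rep_apply[OF M] by simp
    moreover have "a' \<otimes> x \<in> I" if "x \<in> M" "\<forall>x\<in>M. a \<otimes> x \<in> I" for x
      using cong_mod_mem[OF ideal_I a'(3)[OF M False that(1)]] that by blast
    ultimately show ?thesis using a(2) M False by auto
  qed
  then show ?case using a'(1) by blast
qed

abbreviation direct_sum :: "('a set \<Rightarrow> 'a set \<Rightarrow> 'a set) set" where
  "direct_sum \<equiv> dsum_carrier simples (comp_field R I)"

lemma direct_sum_eq_image: "direct_sum = rep ` {a \<in> carrier R. finite (ann_support a)}"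
proof
  show "direct_sum \<subseteq> rep ` {a \<in> carrier R. finite (ann_support a)}"
  proof
    fix f assume "f \<in> direct_sum"
    then have f: "f \<in> carrier End_prod" and fin: "finite {M \<in> simples. f M \<noteq> \<zero>\<^bsub>comp_field R I M\<^esub>}"
      unfolding dsum_carrier_def by auto
    obtain a where a: "a \<in> carrier R" and
      agree: "\<forall>M\<in>simples. (f M \<noteq> \<zero>\<^bsub>comp_field R I M\<^esub> \<longrightarrow> rep a M = f M) \<and>
        (f M = \<zero>\<^bsub>comp_field R I M\<^esub> \<longrightarrow> (\<forall>x\<in>M. a \<otimes> x \<in> I))"
      using rep_interpolate[OF f fin] by auto
    have "rep a = f"
    proof (rule extensionalityI)
      show "rep a \<in> extensional simples" unfolding rep_def by simp
      show "f \<in> extensional simples" using f unfolding prod_ring_def by (simp add: PiE_def)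
      show "rep a M = f M" if "M \<in> simples" for M
        using agree rep_apply_eq_zero_iff[OF that a] that by metis
    qed
    moreover have "finite (ann_support a)" using fin support_rep[OF a] \<open>rep a = f\<close> by simp
    ultimately show "f \<in> rep ` {a \<in> carrier R. finite (ann_support a)}" using a by blast
  qed
  show "rep ` {a \<in> carrier R. finite (ann_support a)} \<subseteq> direct_sum"
    using ring_hom_closed[OF rep_ring_hom] support_rep unfolding dsum_carrier_def by auto
qed

lemma ann_support_add:
  "a \<in> carrier R \<Longrightarrow> b \<in> carrier R \<Longrightarrow> ann_support (a \<oplus> b) \<subseteq> ann_support a \<union> ann_support b"
  unfolding ann_support_def using right_idealD(3)[OF ideal_right_ideal[OF ideal_I]]
    minimal_over_mem_carrier
  by (fastforce simp: l_distr)

lemma ann_support_neg: "a \<in> carrier R \<Longrightarrow> ann_support (\<ominus> a) \<subseteq> ann_support a"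
  unfolding ann_support_def using right_idealD(4)[OF ideal_right_ideal[OF ideal_I]]
    minimal_over_mem_carrier
  by (fastforce simp: l_minus)

lemma ann_support_mult: "a \<in> carrier R \<Longrightarrow> b \<in> carrier R \<Longrightarrow> ann_support (a \<otimes> b) \<subseteq> ann_support a"
  unfolding ann_support_def using simple_stable minimal_over_mem_carrier
    by (fastforce simp: m_assoc)

lemma ann_support_zero: "ann_support \<zero> = {}"
  unfolding ann_support_def using right_idealD(2)[OF ideal_right_ideal[OF ideal_I]]
    minimal_over_mem_carrier
  by auto

lemma right_ideal_ann_support:
  assumes mono: "\<And>A B. A \<subseteq> B \<Longrightarrow> P B \<Longrightarrow> P A" and union: "\<And>A B. P A \<Longrightarrow> P B \<Longrightarrow> P (A \<union> B)"
    and empty: "P {}"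
  shows "right_ideal R {a \<in> carrier R. P (ann_support a)}"
  unfolding right_ideal_iff
proof (intro conjI ballI)
  fix a assume a: "a \<in> {a \<in> carrier R. P (ann_support a)}"
  show "a \<oplus> b \<in> {a \<in> carrier R. P (ann_support a)}" if b: "b \<in> {a \<in> carrier R. P (ann_support a)}"
    for b
    using a b mono[OF ann_support_add union] by blast
  show "\<ominus> a \<in> {a \<in> carrier R. P (ann_support a)}" using a mono[OF ann_support_neg] by blast
  show "a \<otimes> r \<in> {a \<in> carrier R. P (ann_support a)}" if "r \<in> carrier R" for r
    using a that mono[OF ann_support_mult] by blast
qed (use empty ann_support_zero in auto)

lemma right_ideal_direct_sum: "right_ideal rep_ring direct_sum"
  unfolding direct_sum_eq_image
  by (rule right_ideal_image[OF ring_rep_ring rep_ring_hom_image], simp,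
      rule right_ideal_ann_support) (auto intro: finite_subset)

lemma rep_eqI:
  assumes "a \<in> carrier R" "b \<in> carrier R" "\<And>M x. M \<in> simples \<Longrightarrow> x \<in> M \<Longrightarrow> cong_mod I (a \<otimes> x) (b \<otimes> x)"
  shows "rep a = rep b"
  unfolding rep_def using lmult_end_eq_iff[OF ideal_I _ assms(1,2)] assms(3)
    by (auto intro!: restrict_ext)

lemma rep_nonzero_witness:
  assumes c: "c \<in> carrier R" and nz: "rep c \<noteq> \<zero>\<^bsub>End_prod\<^esub>"
  obtains M0 x0 where "M0 \<in> simples" "x0 \<in> M0" "c \<otimes> x0 \<notin> I"
  using socle_faithful[OF vn sa sI c] rep_eq_zero_iff[OF c] nz by blast

lemma minimal_right_ideal_rep_ring_iff:
  "minimal_right_ideal rep_ring N \<longleftrightarrow> right_ideal rep_ring N \<and> {\<zero>\<^bsub>End_prod\<^esub>} \<subset> N \<and>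
     (\<forall>J. right_ideal rep_ring J \<and> {\<zero>\<^bsub>End_prod\<^esub>} \<subseteq> J \<and> J \<subseteq> N \<longrightarrow> J = {\<zero>\<^bsub>End_prod\<^esub>} \<or> J = N)"
proof -
  have "right_ideal rep_ring {\<zero>\<^bsub>rep_ring\<^esub>}"
    using ring.ideal_right_ideal[OF ring_rep_ring ring.zeroideal[OF ring_rep_ring]] .
  then show ?thesis unfolding minimal_right_ideal_def minimal_over_def by simp
qed

text \<open>As \<open>c e0\<close> generates \<open>M0\<close> modulo \<open>I\<close>, the idempotent \<open>e0\<close> of \<open>M0\<close> is \<open>c e0 d\<close>
  modulo \<open>I\<close>, and \<open>u = e0 d b\<close> works.\<close>

lemma rep_divides:
  assumes c: "c \<in> carrier R" and M0: "M0 \<in> simples" and x0: "x0 \<in> M0" "c \<otimes> x0 \<notin> I"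
    and b: "b \<in> carrier R" "ann_support b \<subseteq> {M0}"
  obtains u where "u \<in> carrier R" "rep (c \<otimes> u) = rep b"
proof -
  obtain e0 where e0: "e0 \<in> M0" "\<And>m. m \<in> M0 \<Longrightarrow> cong_mod I (e0 \<otimes> m) m"
    using minimal_over_idempotent[OF vn ideal_I] M0 by blast
  have e0c: "e0 \<in> carrier R" using minimal_over_mem_carrier M0 e0(1) by blast
  have "c \<otimes> e0 \<in> M0" "c \<otimes> e0 \<notin> I"
    using simple_stable[OF c M0 e0(1)] mult_idempotent_notin[OF c M0 x0 e0] by auto
  then obtain p d where pd: "p \<in> I" "d \<in> carrier R" and ced: "(c \<otimes> e0) \<otimes> d = e0 \<ominus> p"
    using minimal_over_generator_factor M0 e0(1) by blast
  have pc: "p \<in> carrier R" using ideal.Icarr[OF ideal_I pd(1)] .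
  define u where "u = e0 \<otimes> d \<otimes> b"
  have uc: "u \<in> carrier R" unfolding u_def using e0c pd(2) b(1) by simp
  have "rep (c \<otimes> u) = rep b"
  proof (rule rep_eqI)
    fix M x assume M: "M \<in> simples" and x: "x \<in> M"
    have xc: "x \<in> carrier R" using minimal_over_mem_carrier M x by blast
    have bx: "b \<otimes> x \<in> carrier R" using b(1) xc by simp
    have "c \<otimes> u \<otimes> x = ((c \<otimes> e0) \<otimes> d) \<otimes> (b \<otimes> x)"
      unfolding u_def using c e0c pd(2) b(1) xc by (simp add: m_assoc)
    also have "\<dots> = e0 \<otimes> (b \<otimes> x) \<ominus> p \<otimes> (b \<otimes> x)"
      using ced e0c pc bx by (simp add: minus_eq l_distr l_minus)
    finally have eq: "c \<otimes> u \<otimes> x = e0 \<otimes> (b \<otimes> x) \<ominus> p \<otimes> (b \<otimes> x)" .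
    show "cong_mod I (c \<otimes> u \<otimes> x) (b \<otimes> x)"
    proof (cases "M = M0")
      case True
      then have "cong_mod I (e0 \<otimes> (b \<otimes> x) \<ominus> p \<otimes> (b \<otimes> x)) (b \<otimes> x \<ominus> \<zero>)"
        using cong_mod_minus[OF ideal_I e0(2)
          cong_mod_zeroI[OF ideal_I ideal.I_r_closed[OF ideal_I pd(1) bx]]]
          simple_stable[OF b(1) M x] by blast
      then show ?thesis using eq bx by (simp add: minus_eq)
    next
      case False
      then have "b \<otimes> x \<in> I" using b(2) M x unfolding ann_support_def by blast
      then have "c \<otimes> u \<otimes> x \<in> I"
        using eq ideal.I_l_closed[OF ideal_I _ e0c] ideal.I_l_closed[OF ideal_I _ pc]
          right_ideal_minus_closed[OF ideal_right_ideal[OF ideal_I]] by simp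
      then show ?thesis using cong_mod_in_ideal[OF ideal_I] \<open>b \<otimes> x \<in> I\<close> by blast
    qed
  qed (use c uc b in auto)
  then show ?thesis using that uc by blast
qed

lemma minimal_right_ideal_subset_direct_sum:
  assumes N: "minimal_right_ideal rep_ring N"
  shows "N \<subseteq> direct_sum"
proof -
  note N' = N[unfolded minimal_right_ideal_rep_ring_iff]
  then obtain h where h: "h \<in> N" "h \<noteq> \<zero>\<^bsub>End_prod\<^esub>" by blast
  obtain c where c: "c \<in> carrier R" "h = rep c"
    using h(1) ring.right_idealD(1)[OF ring_rep_ring] N' by auto
  obtain M0 x0 where x0: "M0 \<in> simples" "x0 \<in> M0" "c \<otimes> x0 \<notin> I"
    using rep_nonzero_witness c h(2) by blast
  obtain e0 where e0: "e0 \<in> M0" "\<And>m. m \<in> M0 \<Longrightarrow> cong_mod I (e0 \<otimes> m) m"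
    using minimal_over_idempotent[OF vn ideal_I] x0(1) by blast
  have e0c: "e0 \<in> carrier R" using minimal_over_mem_carrier x0(1) e0(1) by blast
  have "rep (c \<otimes> e0) = h \<otimes>\<^bsub>rep_ring\<^esub> rep e0"
    using ring_hom_mult[OF rep_ring_hom c(1) e0c] c(2) by simp
  then have "rep (c \<otimes> e0) \<in> N"
    using ring.right_idealD(5)[OF ring_rep_ring] N' h(1) e0c by auto
  moreover have "rep (c \<otimes> e0) \<in> direct_sum"
    unfolding direct_sum_eq_image
    using ann_support_mult_idempotent[OF c(1) x0(1) e0(1)] finite_subset c(1) e0c by blast
  moreover have "rep (c \<otimes> e0) \<noteq> \<zero>\<^bsub>End_prod\<^esub>"
    using rep_eq_zero_iff mult_idempotent_notin[OF c(1) x0 e0] c(1) e0c by simp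
  moreover have "right_ideal rep_ring (N \<inter> direct_sum)" "{\<zero>\<^bsub>End_prod\<^esub>} \<subseteq> N \<inter> direct_sum"
    using ring.right_ideal_Int[OF ring_rep_ring] ring.right_idealD(2)[OF ring_rep_ring] N'
      right_ideal_direct_sum
    by auto
  ultimately have "N \<inter> direct_sum = N" using N' by blast
  then show ?thesis by blast
qed

definition component_ideal :: "'a set \<Rightarrow> ('a set \<Rightarrow> 'a set \<Rightarrow> 'a set) set" where
  "component_ideal M0 = rep ` {a \<in> carrier R. ann_support a \<subseteq> {M0}}"

lemma minimal_right_ideal_component_ideal:
  assumes M0: "M0 \<in> simples"
  shows "minimal_right_ideal rep_ring (component_ideal M0)"
  unfolding minimal_right_ideal_rep_ring_iff
proof (intro conjI allI impI)
  show rK: "right_ideal rep_ring (component_ideal M0)"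
    unfolding component_ideal_def
    by (rule right_ideal_image[OF ring_rep_ring rep_ring_hom_image], simp,
      rule right_ideal_ann_support) auto
  obtain e0 where e0: "e0 \<in> M0" "e0 \<notin> I"
    using minimal_over_idempotent[OF vn ideal_I] M0 by blast
  have e0c: "e0 \<in> carrier R" using minimal_over_mem_carrier M0 e0(1) by blast
  have "rep e0 \<in> component_ideal M0"
    unfolding component_ideal_def using ann_support_mult_idempotent[OF one_closed M0 e0(1)] e0c
      by auto
  moreover have "rep e0 \<noteq> \<zero>\<^bsub>End_prod\<^esub>" using rep_eq_zero_iff e0c e0(2) by simp
  ultimately show "{\<zero>\<^bsub>End_prod\<^esub>} \<subset> component_ideal M0"
    using ring.right_idealD(2)[OF ring_rep_ring rK] by auto
  fix J assume J: "right_ideal rep_ring J \<and> {\<zero>\<^bsub>End_prod\<^esub>} \<subseteq> J \<and> J \<subseteq> component_ideal M0"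
  show "J = {\<zero>\<^bsub>End_prod\<^esub>} \<or> J = component_ideal M0"
  proof (cases "J = {\<zero>\<^bsub>End_prod\<^esub>}")
    case False
    then obtain c where c: "c \<in> carrier R" "ann_support c \<subseteq> {M0}" "rep c \<in> J" "rep c \<noteq> \<zero>\<^bsub>End_prod\<^esub>"
      using J unfolding component_ideal_def by blast
    obtain M x0 where x0: "M \<in> simples" "x0 \<in> M" "c \<otimes> x0 \<notin> I"
      using rep_nonzero_witness c(1,4) by blast
    then have "M = M0" using c(2) unfolding ann_support_def by blast
    have "rep b \<in> J" if b: "b \<in> carrier R" "ann_support b \<subseteq> {M0}" for b
    proof -
      obtain u where u: "u \<in> carrier R" "rep (c \<otimes> u) = rep b"
        using rep_divides[OF c(1) M0 _ _ b] x0 \<open>M = M0\<close> by blast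
      have "rep (c \<otimes> u) = rep c \<otimes>\<^bsub>rep_ring\<^esub> rep u"
        using ring_hom_mult[OF rep_ring_hom c(1) u(1)] by simp
      then show ?thesis
        using ring.right_idealD(5)[OF ring_rep_ring] J c(3) u by auto
    qed
    then show ?thesis using J unfolding component_ideal_def by blast
  qed simp
qed

lemma ann_support_split:
  assumes a: "a \<in> carrier R" and M0: "M0 \<in> simples"
    and e0: "e0 \<in> M0" "\<And>m. m \<in> M0 \<Longrightarrow> cong_mod I (e0 \<otimes> m) m"
  shows "ann_support (a \<ominus> a \<otimes> e0) \<subseteq> ann_support a - {M0}"
proof -
  have e0c: "e0 \<in> carrier R" using minimal_over_mem_carrier M0 e0(1) by blast
  have "a \<otimes> x \<ominus> a \<otimes> e0 \<otimes> x \<in> I" if "x \<in> M0" for x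
  proof -
    have xc: "x \<in> carrier R" using minimal_over_mem_carrier M0 that by blast
    have "cong_mod I (a \<otimes> x \<ominus> a \<otimes> (e0 \<otimes> x)) (a \<otimes> x \<ominus> a \<otimes> x)"
      using cong_mod_minus[OF ideal_I cong_mod_refl[OF ideal_I]
        cong_mod_mult_left[OF ideal_I a e0(2)[OF that]]]
        a xc by simp
    moreover have "a \<otimes> x \<ominus> a \<otimes> x = \<zero>" using a xc by (simp add: minus_eq r_neg)
    ultimately show ?thesis
      using a e0c xc cong_mod_zero_iff[of "a \<otimes> x \<ominus> a \<otimes> (e0 \<otimes> x)" I] by (simp add: m_assoc)
  qed
  then have "M0 \<notin> ann_support (a \<ominus> a \<otimes> e0)"
    using a e0c minimal_over_mem_carrier M0 unfolding ann_support_def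
    by (auto simp: minus_eq l_distr l_minus)
  moreover have "ann_support (a \<ominus> a \<otimes> e0) \<subseteq> ann_support a \<union> ann_support (a \<otimes> e0)"
    using ann_support_add[of a "\<ominus> (a \<otimes> e0)"] ann_support_neg[of "a \<otimes> e0"] a e0c
      by (auto simp: minus_eq)
  ultimately show ?thesis using ann_support_mult[OF a e0c] by blast
qed

lemma rep_mem_if_component_ideals:
  assumes J: "right_ideal rep_ring J" and components: "\<And>M0. M0 \<in> simples \<Longrightarrow> component_ideal M0 \<subseteq> J"
  shows "finite F \<Longrightarrow> a \<in> carrier R \<Longrightarrow> ann_support a \<subseteq> F \<Longrightarrow> rep a \<in> J"
proof (induction F arbitrary: a rule: finite_induct)
  case empty
  then have "a \<in> I" using socle_faithful[OF vn sa sI] unfolding ann_support_def by blast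
  then have "rep a = \<zero>\<^bsub>End_prod\<^esub>" using rep_eq_zero_iff empty.prems(1) by simp
  then show ?case using ring.right_idealD(2)[OF ring_rep_ring J] by simp
next
  case (insert M0 F)
  note a = insert.prems(1)
  show ?case
  proof (cases "M0 \<in> simples")
    case False
    then have "ann_support a \<subseteq> F" using insert.prems(2) unfolding ann_support_def by blast
    then show ?thesis using insert.IH[OF a] by blast
  next
    case M0: True
    obtain e0 where e0: "e0 \<in> M0" "\<And>m. m \<in> M0 \<Longrightarrow> cong_mod I (e0 \<otimes> m) m"
      using minimal_over_idempotent[OF vn ideal_I] M0 by blast
    have e0c: "e0 \<in> carrier R" using minimal_over_mem_carrier M0 e0(1) by blast
    have "ann_support (a \<ominus> a \<otimes> e0) \<subseteq> F"
      using ann_support_split[OF a M0 e0] insert.prems(2) by blast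
    then have "rep (a \<ominus> a \<otimes> e0) \<in> J" using insert.IH a e0c by simp
    moreover have "rep (a \<otimes> e0) \<in> J"
      using components[OF M0] ann_support_mult_idempotent[OF a M0 e0(1)] a e0c
      unfolding component_ideal_def by blast
    moreover have "rep a = rep (a \<otimes> e0) \<oplus>\<^bsub>rep_ring\<^esub> rep (a \<ominus> a \<otimes> e0)"
      using ring_hom_add[OF rep_ring_hom, of "a \<otimes> e0" "a \<ominus> a \<otimes> e0"] a e0c
      by (simp add: minus_eq a_lcomm r_neg)
    ultimately show ?thesis using ring.right_idealD(3)[OF ring_rep_ring J] by simp
  qed
qed

lemma direct_sum_subset_rsoc: "direct_sum \<subseteq> rsoc rep_ring"
  unfolding rsoc_def
proof (rule Inter_greatest)
  fix J assume "J \<in> {J. right_ideal rep_ring J \<and> (\<forall>M. minimal_right_ideal rep_ring M \<longrightarrow> M \<subseteq> J)}"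
  then have "right_ideal rep_ring J" "\<And>M0. M0 \<in> simples \<Longrightarrow> component_ideal M0 \<subseteq> J"
    using minimal_right_ideal_component_ideal by blast+
  then show "direct_sum \<subseteq> J" unfolding direct_sum_eq_image using rep_mem_if_component_ideals
    by blast
qed

lemma rsoc_rep_ring: "rsoc rep_ring = direct_sum"
  using direct_sum_subset_rsoc right_ideal_direct_sum minimal_right_ideal_subset_direct_sum
    unfolding rsoc_def by blast

end

lemma commutative_ring_iso_subring_prod:
  assumes Q: "ring Q" and comm: "\<forall>b\<in>B. commutative_ring (K b)" and S: "S \<subseteq> carrier (prod_ring B K)"
    and iso: "Q \<simeq> (prod_ring B K)\<lparr>carrier := S\<rparr>"
  shows "commutative_ring Q"
  unfolding commutative_ring_def
proof (intro ballI)
  fix x y assume x: "x \<in> carrier Q" and y: "y \<in> carrier Q"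
  obtain h where h: "h \<in> ring_hom Q ((prod_ring B K)\<lparr>carrier := S\<rparr>)" "bij_betw h (carrier Q) S"
    using iso unfolding is_ring_iso_def ring_iso_def by auto
  have hx: "h x \<in> (\<Pi>\<^sub>E b\<in>B. carrier (K b))" and hy: "h y \<in> (\<Pi>\<^sub>E b\<in>B. carrier (K b))"
    using h(2) x y S unfolding bij_betw_def prod_ring_def by auto
  have hxy: "\<forall>b\<in>B. h x b \<otimes>\<^bsub>K b\<^esub> h y b = h y b \<otimes>\<^bsub>K b\<^esub> h x b"
    using comm PiE_mem[OF hx] PiE_mem[OF hy] unfolding commutative_ring_def by blast
  have "h (x \<otimes>\<^bsub>Q\<^esub> y) = (\<lambda>b\<in>B. h x b \<otimes>\<^bsub>K b\<^esub> h y b)"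
    using ring_hom_mult[OF h(1) x y] by (simp add: prod_ring_def)
  also have "\<dots> = (\<lambda>b\<in>B. h y b \<otimes>\<^bsub>K b\<^esub> h x b)" using hxy by (intro restrict_ext) blast
  also have "\<dots> = h (y \<otimes>\<^bsub>Q\<^esub> x)"
    using ring_hom_mult[OF h(1) y x] by (simp add: prod_ring_def)
  finally show "x \<otimes>\<^bsub>Q\<^esub> y = y \<otimes>\<^bsub>Q\<^esub> x"
    using inj_onD[OF bij_betw_imp_inj_on[OF h(2)]] x y ring.ring_simprules(5)[OF Q] by blast
qed

lemma (in ring) components_simple_if_commutative:
  assumes vn: "von_neumann_regular R" and i: "ideal I R" and comm: "commutative_ring (R Quot I)"
  shows "\<forall>H\<in>hom_comps R I. commutative_ring (comp_field R I H) \<and> comp_mult R I H = 1"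
proof
  note comm' = comm[unfolded commutative_ring_Quot_iff[OF i]]
  fix H assume "H \<in> hom_comps R I"
  then have H: "minimal_over R I H" using comm_hom_comps_eq[OF i comm' vn] by blast
  have "commutative_ring (End_ring R I H)" by (rule comm_End_ring_commutative[OF i comm' vn H])
  then show "commutative_ring (comp_field R I H) \<and> comp_mult R I H = 1"
    unfolding comp_field_def comp_simple_self[OF H] using comp_mult_self[OF H] by simp
qed

lemma (in ring) subring_embedding_if_commutative:
  assumes vn: "von_neumann_regular R" and sa: "semiartinian R" and sI: "socle_term R I"
    and comm: "commutative_ring (R Quot I)"
  shows "\<exists>S. subring S (prod_ring (hom_comps R I) (comp_field R I)) \<and>
      R Quot I \<simeq> (prod_ring (hom_comps R I) (comp_field R I)) \<lparr>carrier := S\<rparr> \<and>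
      rsoc ((prod_ring (hom_comps R I) (comp_field R I)) \<lparr>carrier := S\<rparr>)
        = dsum_carrier (hom_comps R I) (comp_field R I)"
proof -
  interpret comm_layer R I
    using vn sa sI comm commutative_ring_Quot_iff[OF socle_term_ideal[OF sI]] by unfold_locales auto
  show ?thesis using subring_rep_image Quot_iso_rep_ring rsoc_rep_ring hom_comps_eq by auto
qed

theorem lemma3p5:
  fixes R :: "('a, 'b) ring_scheme" and I :: "'a set"
  assumes "ring R"
    and "von_neumann_regular R"
    and "semiartinian R"
    and "primitive_factors_artinian R"
    and "socle_term R I" and "I \<noteq> carrier R"
  shows "(commutative_ring (R Quot I)
            \<longleftrightarrow> (\<forall>H\<in>hom_comps R I. commutative_ring (comp_field R I H) \<and> comp_mult R I H = 1))
       \<and> (commutative_ring (R Quot I)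
            \<longleftrightarrow> (\<forall>H\<in>hom_comps R I. commutative_ring (comp_field R I H)) \<and>
                (\<exists>S. subring S (prod_ring (hom_comps R I) (comp_field R I)) \<and>
                     R Quot I \<simeq> (prod_ring (hom_comps R I) (comp_field R I)) \<lparr>carrier := S\<rparr> \<and>
                     rsoc ((prod_ring (hom_comps R I) (comp_field R I)) \<lparr>carrier := S\<rparr>)
                       = dsum_carrier (hom_comps R I) (comp_field R I)))"
proof -
  interpret ring R by (rule assms(1))
  have i: "ideal I R" using socle_term_ideal[OF assms(5)] .
  show ?thesis
    using components_simple_if_commutative[OF assms(2) i]
      subring_embedding_if_commutative[OF assms(2,3,5)]
      commutative_quotient_if_components_simple[OF assms(2-5)]
      commutative_ring_iso_subring_prod[OF ideal.quotient_is_ring[OF i]]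
      subring.axioms(2)[THEN submonoid.subset]
    by (intro conjI iffI) blast+
qed

end
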